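(* Let $N\ge1$, $\delta>0$, $0<s<1$ and let $G$ be an Orlicz function. Let $\{u_k\}_{k\in\mathbb{N}}\subset W^{s,G,\delta}(\mathbb{R}^N)$ with $\sup_k\|u_k\|_{s,G,\delta}<\infty$. Then there exists $u\in W^{s,G,\delta}(\mathbb{R}^N)$ such that, up to a subsequence, $u_k\to u$ in $L^G_{loc}(\mathbb{R}^N)$ (i.e. in $L^G(K)$ for every compact $K\subset\mathbb{R}^N$).
   Context: An Orlicz function is a function $G:[0,\infty)\to[0,\infty)$ that is continuous, convex, increasing, with $G(0)=0$, satisfies $G(2t)\le \mathfrak{c}\,G(t)$ for all $t\ge0$ for some $\mathfrak{c}>2$, and $\lim_{t\to0^+}G(t)/t=0$. For measurable $u$ set $\Phi_G(u)=\int_{\mathbb{R}^N}G(|u(x)|)\,dx$ and $\Psi_{s,G,\delta}(u)=\int_{\mathbb{R}^N}\int_{B(x,\delta)}G\big(\frac{|u(x)-u(y)|}{|x-y|^s}\big)\frac{dy\,dx}{|x-y|^N}$. $L^G(\mathbb{R}^N)=\{u \text{ measurable}:\Phi_G(u)<\infty\}$ with Luxemburg norm $\|u\|_G=\inf\{\lambda>0:\Phi_G(u/\lambda)\le1\}$; $W^{s,G,\delta}(\mathbb{R}^N)=\{u\in L^G(\mathbb{R}^N):\Psi_{s,G,\delta}(u)<\infty\}$ with norm $\|u\|_{s,G,\delta}=\|u\|_G+[u]_{s,G,\delta}$, where $[u]_{s,G,\delta}=\inf\{\lambda>0:\Psi_{s,G,\delta}(u/\lambda)\le1\}$. *)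

theory Defs
  imports "HOL-Analysis.Analysis"
begin

text \<open>Orlicz function G : [0,\<infinity>) \<rightarrow> [0,\<infinity>) (values on negative reals are irrelevant).\<close>
definition orlicz_function :: "(real \<Rightarrow> real) \<Rightarrow> bool" where
  "orlicz_function G \<longleftrightarrow>
     continuous_on {0..} G \<and>
     convex_on {0..} G \<and>
     mono_on {0..} G \<and>
     (\<forall>t\<ge>0. G t \<ge> 0) \<and>
     G 0 = 0 \<and>
     (\<exists>c>2. \<forall>t\<ge>0. G (2 * t) \<le> c * G t) \<and>
     ((\<lambda>t. G t / t) \<longlongrightarrow> 0) (at_right 0)"

definition Phi_on :: "'a::euclidean_space set \<Rightarrow> (real \<Rightarrow> real) \<Rightarrow> ('a \<Rightarrow> real) \<Rightarrow> ennreal" where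
  "Phi_on A G u = (\<integral>\<^sup>+ x \<in> A. ennreal (G \<bar>u x\<bar>) \<partial>lebesgue)"

abbreviation Phi :: "(real \<Rightarrow> real) \<Rightarrow> ('a::euclidean_space \<Rightarrow> real) \<Rightarrow> ennreal" where
  "Phi G u \<equiv> Phi_on UNIV G u"

definition Psi :: "real \<Rightarrow> (real \<Rightarrow> real) \<Rightarrow> real \<Rightarrow> ('a::euclidean_space \<Rightarrow> real) \<Rightarrow> ennreal" where
  "Psi s G \<delta> u = (\<integral>\<^sup>+ x. (\<integral>\<^sup>+ y \<in> ball x \<delta>.
       ennreal (G (\<bar>u x - u y\<bar> / dist x y powr s) / dist x y ^ DIM('a)) \<partial>lebesgue) \<partial>lebesgue)"

definition lux_norm_on :: "'a::euclidean_space set \<Rightarrow> (real \<Rightarrow> real) \<Rightarrow> ('a \<Rightarrow> real) \<Rightarrow> real" where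
  "lux_norm_on A G u = Inf {l. l > 0 \<and> Phi_on A G (\<lambda>x. u x / l) \<le> 1}"

abbreviation lux_norm :: "(real \<Rightarrow> real) \<Rightarrow> ('a::euclidean_space \<Rightarrow> real) \<Rightarrow> real" where
  "lux_norm G u \<equiv> lux_norm_on UNIV G u"

definition seminorm_sGd :: "real \<Rightarrow> (real \<Rightarrow> real) \<Rightarrow> real \<Rightarrow> ('a::euclidean_space \<Rightarrow> real) \<Rightarrow> real" where
  "seminorm_sGd s G \<delta> u = Inf {l. l > 0 \<and> Psi s G \<delta> (\<lambda>x. u x / l) \<le> 1}"

definition norm_sGd :: "real \<Rightarrow> (real \<Rightarrow> real) \<Rightarrow> real \<Rightarrow> ('a::euclidean_space \<Rightarrow> real) \<Rightarrow> real" where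
  "norm_sGd s G \<delta> u = lux_norm G u + seminorm_sGd s G \<delta> u"

definition LG :: "(real \<Rightarrow> real) \<Rightarrow> ('a::euclidean_space \<Rightarrow> real) set" where
  "LG G = {u. u \<in> borel_measurable lebesgue \<and> Phi G u < \<infinity>}"

definition W_sGd :: "real \<Rightarrow> (real \<Rightarrow> real) \<Rightarrow> real \<Rightarrow> ('a::euclidean_space \<Rightarrow> real) set" where
  "W_sGd s G \<delta> = {u. u \<in> LG G \<and> Psi s G \<delta> u < \<infinity>}"

end

theory Submission
  imports Defs "HOL-Library.Diagonal_Subsequence"
begin

section \<open>Orlicz functions\<close>

locale orlicz =
  fixes G :: "real \<Rightarrow> real"
  assumes orlicz_function: "orlicz_function G"
begin

lemma continuous: "continuous_on {0..} G"
  and convex: "convex_on {0..} G"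
  and nonneg: "0 \<le> t \<Longrightarrow> 0 \<le> G t"
  and zero [simp]: "G 0 = 0"
  using orlicz_function unfolding orlicz_function_def by blast+

lemma mono: "0 \<le> a \<Longrightarrow> a \<le> b \<Longrightarrow> G a \<le> G b"
  using orlicz_function unfolding orlicz_function_def mono_on_def by auto

definition doubling_const :: real
  where "doubling_const = (SOME c. c > 2 \<and> (\<forall>t\<ge>0. G (2 * t) \<le> c * G t))"

lemma doubling_const_gt_2: "doubling_const > 2"
  and doubling: "0 \<le> t \<Longrightarrow> G (2 * t) \<le> doubling_const * G t"
proof -
  have "\<exists>c. c > 2 \<and> (\<forall>t\<ge>0. G (2 * t) \<le> c * G t)"
    using orlicz_function unfolding orlicz_function_def by blast
  then have "doubling_const > 2 \<and> (\<forall>t\<ge>0. G (2 * t) \<le> doubling_const * G t)"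
    unfolding doubling_const_def by (rule someI_ex)
  then show "doubling_const > 2" "0 \<le> t \<Longrightarrow> G (2 * t) \<le> doubling_const * G t" by auto
qed

lemma scale_le: "0 \<le> a \<Longrightarrow> a \<le> 1 \<Longrightarrow> 0 \<le> t \<Longrightarrow> G (a * t) \<le> a * G t"
  using convex_onD[OF convex, of a 0 t] by simp

lemma power_two_le: "0 \<le> t \<Longrightarrow> G (2 ^ m * t) \<le> doubling_const ^ m * G t"
proof (induction m)
  case (Suc m)
  have "G (2 ^ Suc m * t) \<le> doubling_const * G (2 ^ m * t)"
    using doubling[of "2 ^ m * t"] Suc.prems by (simp add: mult.assoc)
  also have "\<dots> \<le> doubling_const * (doubling_const ^ m * G t)"
    using Suc doubling_const_gt_2 by (intro mult_left_mono) auto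
  finally show ?case by simp
qed simp

lemma mult_le:
  assumes "0 \<le> l"
  obtains C where "C \<ge> 1" "\<And>t. 0 \<le> t \<Longrightarrow> G (l * t) \<le> C * G t"
proof -
  obtain m :: nat where m: "l \<le> 2 ^ m"
    using real_arch_pow[of 2 l] by (auto intro: less_imp_le)
  have "G (l * t) \<le> doubling_const ^ m * G t" if "0 \<le> t" for t
    using mono[of "l * t" "2 ^ m * t"] power_two_le[OF that, of m] m that assms
    by (simp add: mult_right_mono)
  moreover have "1 \<le> doubling_const ^ m"
    using doubling_const_gt_2 by (simp add: one_le_power)
  ultimately show ?thesis
    using that by blast
qed

lemma linear_growth: "1 \<le> t \<Longrightarrow> t * G 1 \<le> G t"
  using scale_le[of "1 / t" t] by (simp add: field_simps)

lemma add3_le: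
  assumes "0 \<le> a" "0 \<le> b" "0 \<le> c"
  shows "G (a + b + c) \<le> doubling_const ^ 2 * (G a + G b + G c)"
proof -
  define m where "m = max a (max b c)"
  have "G (a + b + c) \<le> G (2 ^ 2 * m)"
    using assms by (intro mono) (auto simp: m_def)
  also have "\<dots> \<le> doubling_const ^ 2 * G m"
    using power_two_le[of m 2] assms by (simp add: m_def)
  also have "G m \<le> G a + G b + G c"
    using nonneg assms by (auto simp: m_def max_def)
  then have "doubling_const ^ 2 * G m \<le> doubling_const ^ 2 * (G a + G b + G c)"
    by (intro mult_left_mono) auto
  finally show ?thesis .
qed

lemma vanishing_or_positive: "(\<forall>t\<ge>0. G t = 0) \<or> (\<forall>t>0. 0 < G t)"
proof (rule ccontr)
  assume "\<not> ?thesis"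
  then obtain t0 t1 where t0: "t0 > 0" "G t0 \<le> 0" and t1: "t1 \<ge> 0" "G t1 \<noteq> 0"
    by (auto simp: not_less)
  obtain m :: nat where "t1 / t0 \<le> 2 ^ m"
    using real_arch_pow[of 2 "t1 / t0"] by (auto intro: less_imp_le)
  then have "G t1 \<le> G (2 ^ m * t0)"
    using t0 t1 by (intro mono) (auto simp: field_simps)
  also have "\<dots> \<le> doubling_const ^ m * G t0"
    using power_two_le t0 by auto
  finally show False
    using nonneg[of t1] nonneg[of t0] t0 t1 by auto
qed

lemma abs_le_of_G_abs_le:
  assumes "0 < G 1" "G \<bar>a\<bar> \<le> M"
  shows "\<bar>a\<bar> \<le> max 1 (M / G 1)"
proof (cases "\<bar>a\<bar> \<le> 1")
  case False
  then have "\<bar>a\<bar> * G 1 \<le> M"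
    using linear_growth[of "\<bar>a\<bar>"] assms(2) by simp
  then show ?thesis
    using assms(1) by (simp add: le_max_iff_disj pos_le_divide_eq)
qed simp

lemma continuous_on_abs: "continuous_on UNIV (\<lambda>t. G \<bar>t\<bar>)"
  by (rule continuous_on_compose2[OF continuous continuous_on_rabs[OF continuous_on_id]]) auto

lemma tendsto_abs: "(f \<longlongrightarrow> a) F \<Longrightarrow> ((\<lambda>x. G \<bar>f x\<bar>) \<longlongrightarrow> G \<bar>a\<bar>) F"
  using continuous_on_abs continuous_on_tendsto_compose[of UNIV "\<lambda>t. G \<bar>t\<bar>" f a F] by auto

lemma small_near_zero:
  assumes "0 < \<eta>"
  obtains \<rho> where "\<rho> > 0" "\<And>t. \<bar>t\<bar> < \<rho> \<Longrightarrow> G \<bar>t\<bar> < \<eta>"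
proof -
  have "((\<lambda>t. G \<bar>t\<bar>) \<longlongrightarrow> 0) (at 0)"
    using tendsto_abs[of "\<lambda>t. t" 0 "at 0"] by (simp add: tendsto_ident_at)
  then obtain \<rho> where "\<rho> > 0" "\<And>t. t \<noteq> 0 \<Longrightarrow> \<bar>t\<bar> < \<rho> \<Longrightarrow> \<bar>G \<bar>t\<bar>\<bar> < \<eta>"
    using assms unfolding LIM_eq by auto
  then show ?thesis
    using that[of \<rho>] assms by (metis abs_zero abs_less_iff zero)
qed

lemma eventually_G_diff_less:
  fixes Y :: "nat \<Rightarrow> 'i \<Rightarrow> real"
  assumes "finite I" "\<And>m. m \<in> I \<Longrightarrow> convergent (\<lambda>k. Y k m)" "0 < \<eta>"
  shows "\<exists>J. \<forall>j\<ge>J. \<forall>k\<ge>J. \<forall>m\<in>I. G \<bar>Y j m - Y k m\<bar> < \<eta>"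
proof -
  obtain \<rho> where \<rho>: "\<rho> > 0" "\<And>t. \<bar>t\<bar> < \<rho> \<Longrightarrow> G \<bar>t\<bar> < \<eta>"
    using small_near_zero[OF assms(3)] by blast
  have "eventually (\<lambda>J. \<forall>j\<ge>J. \<forall>k\<ge>J. G \<bar>Y j m - Y k m\<bar> < \<eta>) sequentially" if m: "m \<in> I" for m
  proof -
    obtain M where M: "\<And>j k. M \<le> j \<Longrightarrow> M \<le> k \<Longrightarrow> dist (Y j m) (Y k m) < \<rho>"
      using convergent_Cauchy[OF assms(2)[OF m]] \<rho>(1) unfolding Cauchy_def by blast
    show ?thesis
      unfolding eventually_sequentially
    proof (intro exI[of _ M] allI impI \<rho>(2))
      fix J j k assume "M \<le> J" "J \<le> j" "J \<le> k"
      then show "\<bar>Y j m - Y k m\<bar> < \<rho>"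
        using M[of j k] by (simp add: dist_real_def)
    qed
  qed
  then have "eventually (\<lambda>J. \<forall>m\<in>I. \<forall>j\<ge>J. \<forall>k\<ge>J. G \<bar>Y j m - Y k m\<bar> < \<eta>) sequentially"
    using assms(1) by (intro eventually_ball_finite) auto
  then obtain N where "\<forall>n\<ge>N. \<forall>m\<in>I. \<forall>j\<ge>n. \<forall>k\<ge>n. G \<bar>Y j m - Y k m\<bar> < \<eta>"
    unfolding eventually_sequentially by blast
  then show ?thesis
    by (intro exI[of _ N]) auto
qed

lemma borel_measurable_abs [measurable]:
  "f \<in> borel_measurable M \<Longrightarrow> (\<lambda>x. G \<bar>f x\<bar>) \<in> borel_measurable M"
  using borel_measurable_continuous_on[OF continuous_on_abs] by blast

end

section \<open>The modulars\<close>

lemma sigma_finite_lebesgue: "sigma_finite_measure (lebesgue :: 'a::euclidean_space measure)"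
proof
  obtain A :: "'a set set" where A: "countable A" "A \<subseteq> sets lborel" "\<Union>A = space lborel"
    "\<forall>a\<in>A. emeasure lborel a \<noteq> \<infinity>"
    using sigma_finite_measure.sigma_finite_countable[OF sigma_finite_lborel] by blast
  then show "\<exists>A::'a set set. countable A \<and> A \<subseteq> sets lebesgue \<and> \<Union>A = space lebesgue \<and>
      (\<forall>a\<in>A. emeasure lebesgue a \<noteq> \<infinity>)"
    by (intro exI[of _ A]) (auto simp: emeasure_completion main_part_sets subset_eq)
qed

lemma lebesgue_measurable_ident [measurable]:
  "(\<lambda>x. x) \<in> (lebesgue :: 'a::euclidean_space measure) \<rightarrow>\<^sub>M borel"
  by (rule measurable_completion) simp

definition Psi_kernel ::
    "real \<Rightarrow> (real \<Rightarrow> real) \<Rightarrow> real \<Rightarrow> ('a::euclidean_space \<Rightarrow> real) \<Rightarrow> 'a \<Rightarrow> 'a \<Rightarrow> ennreal"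
  where "Psi_kernel s G \<delta> u x y =
    ennreal (G (\<bar>u x - u y\<bar> / dist x y powr s) / dist x y ^ DIM('a)) * indicator (ball x \<delta>) y"

definition Psi_density ::
    "real \<Rightarrow> (real \<Rightarrow> real) \<Rightarrow> real \<Rightarrow> ('a::euclidean_space \<Rightarrow> real) \<Rightarrow> 'a \<Rightarrow> ennreal"
  where "Psi_density s G \<delta> u x = (\<integral>\<^sup>+y. Psi_kernel s G \<delta> u x y \<partial>lebesgue)"

lemma Psi_eq_nn_integral_density: "Psi s G \<delta> u = (\<integral>\<^sup>+x. Psi_density s G \<delta> u x \<partial>lebesgue)"
  unfolding Psi_def Psi_density_def Psi_kernel_def ..

lemma Phi_on_subset_le: "A \<subseteq> B \<Longrightarrow> Phi_on A G f \<le> Phi_on B G f"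
  unfolding Phi_on_def by (rule nn_set_integral_set_mono)

lemma set_nn_integral_Psi_density_le: "(\<integral>\<^sup>+x\<in>A. Psi_density s G \<delta> f x \<partial>lebesgue) \<le> Psi s G \<delta> f"
  using nn_set_integral_set_mono[of A UNIV] by (simp add: Psi_eq_nn_integral_density)

lemma ennreal_scaled_le_one:
  assumes "P < \<infinity>"
  obtains l :: real where "1 \<le> l" "ennreal (1 / l) * P \<le> 1"
proof -
  obtain p where p: "P = ennreal p" "0 \<le> p"
    using assms by (cases P) auto
  have "ennreal (1 / max 1 p) * P \<le> 1"
    using p by (simp add: ennreal_mult[symmetric] divide_le_eq)
  then show ?thesis
    using that[of "max 1 p"] by simp
qed

lemma luxemburg_Inf_less_imp_le_one:
  fixes F :: "('a \<Rightarrow> real) \<Rightarrow> ennreal"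
  assumes nonempty: "\<exists>l>0. F (\<lambda>x. u x / l) \<le> 1"
    and less: "Inf {l. l > 0 \<and> F (\<lambda>x. u x / l) \<le> 1} < L"
    and mono: "\<And>l. 0 < l \<Longrightarrow> l \<le> L \<Longrightarrow> F (\<lambda>x. u x / L) \<le> F (\<lambda>x. u x / l)"
  shows "F (\<lambda>x. u x / L) \<le> 1"
proof -
  obtain l where "l > 0" "F (\<lambda>x. u x / l) \<le> 1" "l < L"
    using cInf_lessD[OF _ less] nonempty by auto
  then show ?thesis
    using mono[of l] by auto
qed

lemma luxemburg_Inf_nonneg:
  "\<exists>l>0. F (\<lambda>x. u x / l) \<le> (1 :: ennreal) \<Longrightarrow> 0 \<le> Inf {l :: real. l > 0 \<and> F (\<lambda>x. u x / l) \<le> 1}"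
  by (rule cInf_greatest) auto

lemma lux_norm_on_abs_le:
  assumes "0 < \<epsilon>" "Phi_on A G (\<lambda>x. u x / \<epsilon>) \<le> 1"
  shows "\<bar>lux_norm_on A G u\<bar> \<le> \<epsilon>"
proof -
  have "0 \<le> lux_norm_on A G u"
    unfolding lux_norm_on_def using assms by (intro luxemburg_Inf_nonneg) auto
  moreover have "lux_norm_on A G u \<le> \<epsilon>"
    unfolding lux_norm_on_def using assms by (intro cInf_lower) (auto intro: bdd_belowI[of _ 0])
  ultimately show ?thesis
    by simp
qed

lemma lux_norm_on_vanishing:
  assumes "\<And>t. 0 \<le> t \<Longrightarrow> G t = 0"
  shows "lux_norm_on K G u = 0"
proof -
  have "{l. l > 0 \<and> Phi_on K G (\<lambda>x. u x / l) \<le> 1} = {0<..}"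
    using assms by (auto simp: Phi_on_def)
  then show ?thesis
    by (simp add: lux_norm_on_def)
qed

context orlicz
begin

lemma measurable_Psi_kernel:
  fixes u :: "'a::euclidean_space \<Rightarrow> real"
  assumes [measurable]: "u \<in> borel_measurable lebesgue"
  shows "case_prod (Psi_kernel s G \<delta> u) \<in> borel_measurable (lebesgue \<Otimes>\<^sub>M lebesgue)"
proof -
  have "case_prod (Psi_kernel s G \<delta> u) = (\<lambda>p.
      ennreal (G \<bar>(u (fst p) - u (snd p)) / dist (fst p) (snd p) powr s\<bar> / dist (fst p) (snd p) ^ DIM('a))
      * indicator {p. dist (fst p) (snd p) < \<delta>} p)"
    by (auto simp: Psi_kernel_def abs_divide indicator_def fun_eq_iff)
  also have "\<dots> \<in> borel_measurable (lebesgue \<Otimes>\<^sub>M lebesgue)"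
    by measurable
  finally show ?thesis .
qed

lemma borel_measurable_Psi_kernel [measurable]:
  "u \<in> borel_measurable lebesgue \<Longrightarrow> Psi_kernel s G \<delta> u x \<in> borel_measurable lebesgue"
  using measurable_compose[OF measurable_Pair1'[of x lebesgue lebesgue] measurable_Psi_kernel]
  by simp

lemma borel_measurable_Psi_density [measurable]:
  "u \<in> borel_measurable lebesgue \<Longrightarrow> Psi_density s G \<delta> u \<in> borel_measurable lebesgue"
  unfolding Psi_density_def
  by (rule sigma_finite_measure.borel_measurable_nn_integral[OF sigma_finite_lebesgue
        measurable_Psi_kernel])

lemma Phi_on_le_cmult:
  assumes [measurable]: "f \<in> borel_measurable lebesgue" "A \<in> sets lebesgue"
    and C: "0 \<le> C" "\<And>x. G \<bar>g x\<bar> \<le> C * G \<bar>f x\<bar>"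
  shows "Phi_on A G g \<le> ennreal C * Phi_on A G f"
proof -
  have "Phi_on A G g \<le> (\<integral>\<^sup>+x. ennreal C * (ennreal (G \<bar>f x\<bar>) * indicator A x) \<partial>lebesgue)"
    unfolding Phi_on_def using C nonneg
    by (intro nn_integral_mono) (auto simp: indicator_def ennreal_mult[symmetric] intro!: ennreal_leI)
  also have "\<dots> = ennreal C * Phi_on A G f"
    unfolding Phi_on_def by (rule nn_integral_cmult) measurable
  finally show ?thesis .
qed

lemma Psi_le_cmult:
  fixes f g :: "'a::euclidean_space \<Rightarrow> real"
  assumes [measurable]: "f \<in> borel_measurable lebesgue"
    and C: "0 \<le> C" "\<And>x y. G (\<bar>g x - g y\<bar> / dist x y powr s) \<le> C * G (\<bar>f x - f y\<bar> / dist x y powr s)"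
  shows "Psi s G \<delta> g \<le> ennreal C * Psi s G \<delta> f"
proof -
  have "Psi_kernel s G \<delta> g x y \<le> ennreal C * Psi_kernel s G \<delta> f x y" for x y
    unfolding Psi_kernel_def using C nonneg
    by (auto simp: indicator_def ennreal_mult[symmetric] divide_right_mono intro!: ennreal_leI)
  then have "Psi_density s G \<delta> g x \<le> ennreal C * Psi_density s G \<delta> f x" for x
    unfolding Psi_density_def by (subst nn_integral_cmult[symmetric]) (auto intro: nn_integral_mono)
  then have "Psi s G \<delta> g \<le> (\<integral>\<^sup>+x. ennreal C * Psi_density s G \<delta> f x \<partial>lebesgue)"
    unfolding Psi_eq_nn_integral_density by (intro nn_integral_mono)
  also have "\<dots> = ennreal C * Psi s G \<delta> f"
    unfolding Psi_eq_nn_integral_density by (rule nn_integral_cmult) measurable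
  finally show ?thesis .
qed

lemma Phi_on_diff_le:
  assumes [measurable]: "f1 \<in> borel_measurable lebesgue" "f2 \<in> borel_measurable lebesgue"
    "Q \<in> sets lebesgue"
  shows "Phi_on Q G (\<lambda>x. f1 x - f2 x) \<le> ennreal (doubling_const ^ 2) *
    (Phi_on Q G (\<lambda>x. f1 x - a1) + ennreal (G \<bar>a1 - a2\<bar>) * emeasure lebesgue Q +
     Phi_on Q G (\<lambda>x. f2 x - a2))"
proof -
  have "ennreal (G \<bar>f1 x - f2 x\<bar>) \<le> ennreal (doubling_const ^ 2) *
    (ennreal (G \<bar>f1 x - a1\<bar>) + ennreal (G \<bar>a1 - a2\<bar>) + ennreal (G \<bar>f2 x - a2\<bar>))" for x
  proof -
    have "G \<bar>f1 x - f2 x\<bar> \<le> G (\<bar>f1 x - a1\<bar> + \<bar>a1 - a2\<bar> + \<bar>f2 x - a2\<bar>)"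
      by (rule mono) auto
    also have "\<dots> \<le> doubling_const ^ 2 * (G \<bar>f1 x - a1\<bar> + G \<bar>a1 - a2\<bar> + G \<bar>f2 x - a2\<bar>)"
      by (rule add3_le) auto
    finally show ?thesis
      using nonneg by (simp add: ennreal_leI flip: ennreal_plus ennreal_mult)
  qed
  then have "Phi_on Q G (\<lambda>x. f1 x - f2 x) \<le> (\<integral>\<^sup>+x. ennreal (doubling_const ^ 2) *
      (ennreal (G \<bar>f1 x - a1\<bar>) * indicator Q x + ennreal (G \<bar>a1 - a2\<bar>) * indicator Q x +
       ennreal (G \<bar>f2 x - a2\<bar>) * indicator Q x) \<partial>lebesgue)"
    unfolding Phi_on_def by (intro nn_integral_mono) (simp add: indicator_def)
  also have "\<dots> = ennreal (doubling_const ^ 2) *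
    (Phi_on Q G (\<lambda>x. f1 x - a1) + ennreal (G \<bar>a1 - a2\<bar>) * emeasure lebesgue Q +
     Phi_on Q G (\<lambda>x. f2 x - a2))"
    unfolding Phi_on_def by (simp add: nn_integral_cmult nn_integral_add nn_integral_cmult_indicator)
  finally show ?thesis .
qed

lemma exists_scaling_Phi_on_le_one:
  assumes [measurable]: "f \<in> borel_measurable lebesgue" "A \<in> sets lebesgue"
    and "Phi_on A G f < \<infinity>"
  shows "\<exists>l>0. Phi_on A G (\<lambda>x. f x / l) \<le> 1"
proof -
  obtain l where l: "1 \<le> l" "ennreal (1 / l) * Phi_on A G f \<le> 1"
    using ennreal_scaled_le_one assms(3) by blast
  have "Phi_on A G (\<lambda>x. f x / l) \<le> ennreal (1 / l) * Phi_on A G f"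
    using l scale_le[of "1 / l"] by (intro Phi_on_le_cmult) (auto simp: abs_divide)
  then show ?thesis
    using l by (intro exI[of _ l]) auto
qed

lemma exists_scaling_Psi_le_one:
  fixes f :: "'a::euclidean_space \<Rightarrow> real"
  assumes [measurable]: "f \<in> borel_measurable lebesgue" and "Psi s G \<delta> f < \<infinity>"
  shows "\<exists>l>0. Psi s G \<delta> (\<lambda>x. f x / l) \<le> 1"
proof -
  obtain l where l: "1 \<le> l" "ennreal (1 / l) * Psi s G \<delta> f \<le> 1"
    using ennreal_scaled_le_one assms(2) by blast
  have "G (\<bar>f x / l - f y / l\<bar> / dist x y powr s) \<le> (1 / l) * G (\<bar>f x - f y\<bar> / dist x y powr s)"
    for x y
    using l scale_le[of "1 / l" "\<bar>f x - f y\<bar> / dist x y powr s"]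
    by (simp add: abs_divide diff_divide_distrib[symmetric])
  then have "Psi s G \<delta> (\<lambda>x. f x / l) \<le> ennreal (1 / l) * Psi s G \<delta> f"
    using l by (intro Psi_le_cmult) auto
  then show ?thesis
    using l by (intro exI[of _ l]) auto
qed

lemma modulars_le_one_above_norm:
  fixes u :: "'a::euclidean_space \<Rightarrow> real"
  assumes u: "u \<in> W_sGd s G \<delta>" and L: "norm_sGd s G \<delta> u < L"
  shows "Phi G (\<lambda>x. u x / L) \<le> 1" "Psi s G \<delta> (\<lambda>x. u x / L) \<le> 1"
proof -
  have [measurable]: "u \<in> borel_measurable lebesgue" and "Phi G u < \<infinity>" "Psi s G \<delta> u < \<infinity>"
    using u by (auto simp: W_sGd_def LG_def)
  then have ne: "\<exists>l>0. Phi G (\<lambda>x. u x / l) \<le> 1" "\<exists>l>0. Psi s G \<delta> (\<lambda>x. u x / l) \<le> 1"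
    by (auto intro: exists_scaling_Phi_on_le_one exists_scaling_Psi_le_one)
  have "0 \<le> lux_norm G u" "0 \<le> seminorm_sGd s G \<delta> u"
    unfolding lux_norm_on_def seminorm_sGd_def using ne by (auto intro: luxemburg_Inf_nonneg)
  then have less: "lux_norm G u < L" "seminorm_sGd s G \<delta> u < L"
    using L unfolding norm_sGd_def by auto
  have "Phi G (\<lambda>x. u x / L) \<le> Phi G (\<lambda>x. u x / l)"
    "Psi s G \<delta> (\<lambda>x. u x / L) \<le> Psi s G \<delta> (\<lambda>x. u x / l)" if "0 < l" "l \<le> L" for l
  proof -
    have "\<bar>u x / L\<bar> \<le> \<bar>u x / l\<bar>" "\<bar>u x / L - u y / L\<bar> \<le> \<bar>u x / l - u y / l\<bar>" for x y
      using that by (auto simp: abs_divide diff_divide_distrib[symmetric] intro!: divide_left_mono)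
    note abs_le = this
    have "G \<bar>u x / L\<bar> \<le> 1 * G \<bar>u x / l\<bar>" for x
      using abs_le(1)[of x] by (simp add: mono)
    then show "Phi G (\<lambda>x. u x / L) \<le> Phi G (\<lambda>x. u x / l)"
      using Phi_on_le_cmult[of "\<lambda>x. u x / l" UNIV 1 "\<lambda>x. u x / L"] by simp
    have "G (\<bar>u x / L - u y / L\<bar> / dist x y powr s) \<le> 1 * G (\<bar>u x / l - u y / l\<bar> / dist x y powr s)"
      for x y
      using abs_le(2)[of x y] by (simp add: mono divide_right_mono)
    then show "Psi s G \<delta> (\<lambda>x. u x / L) \<le> Psi s G \<delta> (\<lambda>x. u x / l)"
      using Psi_le_cmult[of "\<lambda>x. u x / l" 1 "\<lambda>x. u x / L"] by simp
  qed
  then show "Phi G (\<lambda>x. u x / L) \<le> 1" "Psi s G \<delta> (\<lambda>x. u x / L) \<le> 1"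
    using luxemburg_Inf_less_imp_le_one[where F="Phi G", OF ne(1) less(1)[unfolded lux_norm_on_def]]
      luxemburg_Inf_less_imp_le_one[where F="Psi s G \<delta>", OF ne(2) less(2)[unfolded seminorm_sGd_def]]
    by auto
qed

lemma cmult_in_W_sGd:
  fixes z :: "'a::euclidean_space \<Rightarrow> real"
  assumes z: "z \<in> W_sGd s G \<delta>"
  shows "(\<lambda>x. c * z x) \<in> W_sGd s G \<delta>"
proof -
  have [measurable]: "z \<in> borel_measurable lebesgue" and "Phi G z < \<infinity>" "Psi s G \<delta> z < \<infinity>"
    using z by (auto simp: W_sGd_def LG_def)
  obtain C where C: "C \<ge> 1" "\<And>t. 0 \<le> t \<Longrightarrow> G (\<bar>c\<bar> * t) \<le> C * G t"
    using mult_le[of "\<bar>c\<bar>"] by auto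
  have "Phi G (\<lambda>x. c * z x) \<le> ennreal C * Phi G z"
    using C by (intro Phi_on_le_cmult) (auto simp: abs_mult)
  moreover have "G (\<bar>c * z x - c * z y\<bar> / dist x y powr s) \<le> C * G (\<bar>z x - z y\<bar> / dist x y powr s)"
    for x y
    using C(2)[of "\<bar>z x - z y\<bar> / dist x y powr s"] by (simp add: abs_mult flip: right_diff_distrib)
  then have "Psi s G \<delta> (\<lambda>x. c * z x) \<le> ennreal C * Psi s G \<delta> z"
    using C by (intro Psi_le_cmult) auto
  ultimately show ?thesis
    using \<open>Phi G z < \<infinity>\<close> \<open>Psi s G \<delta> z < \<infinity>\<close>
    by (auto simp: W_sGd_def LG_def ennreal_mult_less_top le_less_trans)
qed

lemma zero_in_W_sGd: "(\<lambda>x. 0) \<in> W_sGd s G \<delta>"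
  by (simp add: W_sGd_def LG_def Phi_on_def Psi_def)

end

section \<open>Cubes\<close>

definition cube :: "real \<Rightarrow> ('a::euclidean_space \<Rightarrow> int) \<Rightarrow> 'a set"
  where "cube e m = {x. \<forall>i\<in>Basis. of_int (m i) * e \<le> x \<bullet> i \<and> x \<bullet> i < (of_int (m i) + 1) * e}"

lemma sets_cube_borel: "cube e m \<in> sets borel"
proof -
  have "cube e m = (\<Inter>i\<in>Basis. {x. of_int (m i) * e \<le> x \<bullet> i} \<inter> {x. x \<bullet> i < (of_int (m i) + 1) * e})"
    unfolding cube_def by auto
  also have "\<dots> \<in> sets borel"
    by (intro sets.finite_INT finite_Basis sets.Int borel_closed borel_open
        closed_halfspace_component_ge open_halfspace_component_lt) auto
  finally show ?thesis .
qed

lemma sets_cube [measurable]: "cube e m \<in> sets lebesgue"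
  by (rule sets_completionI_sets) (simp add: sets_cube_borel)

lemma emeasure_cube:
  fixes m :: "'a::euclidean_space \<Rightarrow> int"
  assumes "e > 0"
  shows "emeasure lebesgue (cube e m) = ennreal (e ^ DIM('a))"
proof -
  define a :: 'a where "a = (\<Sum>i\<in>Basis. (of_int (m i) * e) *\<^sub>R i)"
  define b :: 'a where "b = (\<Sum>i\<in>Basis. ((of_int (m i) + 1) * e) *\<^sub>R i)"
  have a: "a \<bullet> i = of_int (m i) * e" and b: "b \<bullet> i = (of_int (m i) + 1) * e" if "i \<in> Basis" for i
    unfolding a_def b_def using that by (simp_all add: inner_sum_left inner_Basis if_distrib cong: if_cong)
  have "box a b \<subseteq> cube e m" "cube e m \<subseteq> cbox a b"
    using a b by (auto simp: cube_def mem_box less_imp_le)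
  then have "emeasure lborel (box a b) \<le> emeasure lborel (cube e m)"
    "emeasure lborel (cube e m) \<le> emeasure lborel (cbox a b)"
    using sets_cube_borel by (auto intro!: emeasure_mono)
  moreover have "(\<Prod>i\<in>(Basis::'a set). (b - a) \<bullet> i) = e ^ DIM('a)"
    using a b by (simp add: inner_diff_left algebra_simps)
  ultimately have "emeasure lborel (cube e m) = ennreal (e ^ DIM('a))"
    using a b assms by (simp add: emeasure_lborel_box_eq emeasure_lborel_cbox_eq antisym)
  then show ?thesis
    using sets_cube_borel[of e m] by (simp add: emeasure_completion main_part_sets)
qed

lemma dist_cube_le:
  fixes m :: "'a::euclidean_space \<Rightarrow> int"
  assumes "x \<in> cube e m" "y \<in> cube e m"
  shows "dist x y \<le> real DIM('a) * e"
proof -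
  have "\<bar>(x - y) \<bullet> i\<bar> \<le> e" if "i \<in> Basis" for i
    using assms that unfolding cube_def by (fastforce simp: inner_diff_left abs_le_iff algebra_simps)
  then have "(\<Sum>i\<in>Basis. \<bar>(x - y) \<bullet> i\<bar>) \<le> (\<Sum>i\<in>(Basis::'a set). e)"
    by (intro sum_mono) auto
  then show ?thesis
    using norm_le_l1[of "x - y"] by (simp add: dist_norm)
qed

lemma cube_disjoint:
  assumes "e > 0" "i \<in> Basis" "m i \<noteq> m' i"
  shows "cube e m \<inter> cube e m' = {}"
proof (rule ccontr)
  assume "cube e m \<inter> cube e m' \<noteq> {}"
  then obtain x where "x \<in> cube e m" "x \<in> cube e m'"
    by auto
  then have "of_int (m i) * e < (of_int (m' i) + 1) * e" "of_int (m' i) * e < (of_int (m i) + 1) * e"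
    using assms(2) unfolding cube_def by fastforce+
  then have "m i < m' i + 1" "m' i < m i + 1"
    using assms(1) by (simp_all add: mult_less_cancel_right)
  then show False
    using assms(3) by linarith
qed

text \<open>Indices of the cubes of side \<open>e\<close> that meet the ball of radius \<open>R\<close>; they are
  \<open>undefined\<close> outside \<open>Basis\<close>, so that distinct indices give disjoint cubes.\<close>

definition cube_indices :: "real \<Rightarrow> real \<Rightarrow> ('a::euclidean_space \<Rightarrow> int) set"
  where "cube_indices e R = PiE Basis (\<lambda>_. {- (\<lceil>R / e\<rceil> + 1) .. \<lceil>R / e\<rceil> + 1})"

lemma finite_cube_indices: "finite (cube_indices e R)"
  unfolding cube_indices_def by (intro finite_PiE) auto

lemma disjoint_family_cube_indices: "e > 0 \<Longrightarrow> disjoint_family_on (cube e) (cube_indices e R)"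
  unfolding disjoint_family_on_def cube_indices_def
proof (intro ballI impI)
  fix m n assume "e > 0" "m \<in> PiE Basis (\<lambda>_. {- (\<lceil>R / e\<rceil> + 1) .. \<lceil>R / e\<rceil> + 1})"
    "n \<in> PiE Basis (\<lambda>_. {- (\<lceil>R / e\<rceil> + 1) .. \<lceil>R / e\<rceil> + 1})" "m \<noteq> n"
  then obtain i where "i \<in> Basis" "m i \<noteq> n i"
    using PiE_ext by blast
  then show "cube e m \<inter> cube e n = {}"
    using cube_disjoint \<open>e > 0\<close> by blast
qed

lemma cball_subset_cubes:
  fixes R :: real
  assumes e: "e > 0"
  shows "cball (0::'a::euclidean_space) R \<subseteq> (\<Union>m\<in>cube_indices e R. cube e m)"
proof
  fix x :: 'a assume x: "x \<in> cball 0 R"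
  define m where "m = restrict (\<lambda>i. \<lfloor>x \<bullet> i / e\<rfloor>) (Basis :: 'a set)"
  have "m \<in> cube_indices e R"
    unfolding cube_indices_def m_def
  proof (intro restrict_PiE_iff[THEN iffD2] ballI)
    fix i :: 'a assume i: "i \<in> Basis"
    have "\<bar>x \<bullet> i\<bar> \<le> R"
      using x Basis_le_norm[OF i, of x] by simp
    then have "x \<bullet> i / e \<le> R / e" "- R / e \<le> x \<bullet> i / e"
      using e divide_right_mono[of "- R" "x \<bullet> i" e] by (auto simp: divide_right_mono abs_le_iff)
    then show "\<lfloor>x \<bullet> i / e\<rfloor> \<in> {- (\<lceil>R / e\<rceil> + 1)..\<lceil>R / e\<rceil> + 1}"
      by simp linarith
  qed
  moreover have "x \<in> cube e m"
    unfolding cube_def m_def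
  proof (intro CollectI ballI)
    fix i :: 'a assume i: "i \<in> Basis"
    have "of_int \<lfloor>x \<bullet> i / e\<rfloor> \<le> x \<bullet> i / e" "x \<bullet> i / e < of_int \<lfloor>x \<bullet> i / e\<rfloor> + 1"
      by linarith+
    then have "of_int \<lfloor>x \<bullet> i / e\<rfloor> * e \<le> (x \<bullet> i / e) * e" "(x \<bullet> i / e) * e < (of_int \<lfloor>x \<bullet> i / e\<rfloor> + 1) * e"
      using e by (intro mult_right_mono mult_strict_right_mono; simp)+
    then show "of_int (restrict (\<lambda>i. \<lfloor>x \<bullet> i / e\<rfloor>) Basis i) * e \<le> x \<bullet> i \<and>
        x \<bullet> i < (of_int (restrict (\<lambda>i. \<lfloor>x \<bullet> i / e\<rfloor>) Basis i) + 1) * e"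
      using i e by simp
  qed
  ultimately show "x \<in> (\<Union>m\<in>cube_indices e R. cube e m)"
    by blast
qed

lemma sum_set_nn_integral_le:
  fixes h :: "'a \<Rightarrow> ennreal"
  assumes [measurable]: "h \<in> borel_measurable M" "\<And>m. m \<in> I \<Longrightarrow> Q m \<in> sets M"
    and "finite I" "disjoint_family_on Q I"
  shows "(\<Sum>m\<in>I. \<integral>\<^sup>+x\<in>Q m. h x \<partial>M) \<le> (\<integral>\<^sup>+x. h x \<partial>M)"
proof -
  have "(\<Sum>m\<in>I. \<integral>\<^sup>+x\<in>Q m. h x \<partial>M) = (\<integral>\<^sup>+x. h x * (\<Sum>m\<in>I. indicator (Q m) x) \<partial>M)"
    by (subst nn_integral_sum[symmetric]) (auto simp: sum_distrib_left)
  also have "\<dots> = (\<integral>\<^sup>+x\<in>(\<Union>m\<in>I. Q m). h x \<partial>M)"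
    by (simp add: indicator_UN_disjoint[OF assms(3,4)])
  also have "\<dots> \<le> (\<integral>\<^sup>+x. h x \<partial>M)"
    by (intro nn_integral_mono) (simp add: indicator_def)
  finally show ?thesis .
qed

lemma set_nn_integral_le_sum_cover:
  fixes h :: "'a \<Rightarrow> ennreal"
  assumes [measurable]: "h \<in> borel_measurable M" "\<And>m. m \<in> I \<Longrightarrow> Q m \<in> sets M"
    and "finite I" "A \<subseteq> (\<Union>m\<in>I. Q m)"
  shows "(\<integral>\<^sup>+x\<in>A. h x \<partial>M) \<le> (\<Sum>m\<in>I. \<integral>\<^sup>+x\<in>Q m. h x \<partial>M)"
proof -
  have "indicator A x \<le> (\<Sum>m\<in>I. indicator (Q m) x :: ennreal)" for x
  proof (cases "x \<in> A")
    case True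
    then obtain m where "m \<in> I" "x \<in> Q m"
      using assms(4) by auto
    then show ?thesis
      using member_le_sum[of m I "\<lambda>m. indicator (Q m) x :: ennreal"] assms(3) True by auto
  qed simp
  then have "(\<integral>\<^sup>+x\<in>A. h x \<partial>M) \<le> (\<integral>\<^sup>+x. (\<Sum>m\<in>I. h x * indicator (Q m) x) \<partial>M)"
    by (intro nn_integral_mono) (simp add: mult_left_mono flip: sum_distrib_left)
  also have "\<dots> = (\<Sum>m\<in>I. \<integral>\<^sup>+x\<in>Q m. h x \<partial>M)"
    by (rule nn_integral_sum) auto
  finally show ?thesis .
qed

section \<open>Approximation by constants on cubes\<close>

lemma ennreal_le_divide_of_mult_le:
  assumes "0 < \<mu>" "0 \<le> c" "X * ennreal \<mu> \<le> ennreal c * S"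
  shows "X \<le> ennreal (c / \<mu>) * S"
proof -
  have "X = X * ennreal \<mu> * ennreal (1 / \<mu>)"
    using assms(1) by (simp add: mult.assoc flip: ennreal_mult)
  also have "\<dots> \<le> ennreal c * S * ennreal (1 / \<mu>)"
    using assms(3) by (rule mult_right_mono) simp
  also have "\<dots> = ennreal (c / \<mu>) * S"
    using assms(1,2) ennreal_mult[of c "1 / \<mu>"] by (simp add: mult_ac)
  finally show ?thesis .
qed

lemma emeasure_less_mult_le:
  fixes g :: "'a \<Rightarrow> ennreal"
  assumes [measurable]: "g \<in> borel_measurable M" "Q \<in> sets M" and ab: "0 < a" "0 \<le> b"
  shows "emeasure M {x\<in>Q. ennreal a < g x * ennreal b} \<le> ennreal (b / a) * (\<integral>\<^sup>+x\<in>Q. g x \<partial>M)"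
proof -
  have "{x\<in>Q. ennreal a < g x * ennreal b} \<subseteq> {x\<in>Q. 1 \<le> ennreal (b / a) * g x}"
  proof safe
    fix x assume x: "ennreal a < g x * ennreal b"
    show "1 \<le> ennreal (b / a) * g x"
    proof (cases "g x")
      case (real r)
      then have "a < r * b"
        using x ab by (simp add: ennreal_mult[symmetric] ennreal_less_iff)
      then show ?thesis
        using real ab by (simp add: ennreal_mult[symmetric] le_divide_eq mult.commute ennreal_1[symmetric]
            del: ennreal_1)
    next
      case top
      then have "b \<noteq> 0"
        using x by auto
      then show ?thesis
        using top ab by (simp add: ennreal_mult_top)
    qed
  qed
  moreover have "{x\<in>Q. 1 \<le> ennreal (b / a) * g x} = {x\<in>space M. 1 \<le> ennreal (b / a) * g x} \<inter> Q"
    using sets.sets_into_space[OF assms(2)] by auto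
  ultimately have "emeasure M {x\<in>Q. ennreal a < g x * ennreal b} \<le> emeasure M {x\<in>Q. 1 \<le> ennreal (b / a) * g x}"
    by (intro emeasure_mono) auto
  also have "\<dots> \<le> ennreal (b / a) * (\<integral>\<^sup>+x\<in>Q. g x \<partial>M)"
    using nn_integral_Markov_inequality[of g Q M] by auto
  finally show ?thesis .
qed

lemma emeasure_above_three_averages_le:
  fixes g :: "'a \<Rightarrow> ennreal"
  assumes [measurable]: "g \<in> borel_measurable M" "Q \<in> sets M"
    and finite: "emeasure M Q < \<infinity>" "(\<integral>\<^sup>+x\<in>Q. g x \<partial>M) < \<infinity>"
  shows "3 * emeasure M {x\<in>Q. 3 * (\<integral>\<^sup>+x\<in>Q. g x \<partial>M) < g x * emeasure M Q} \<le> emeasure M Q"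
proof -
  obtain I where I: "(\<integral>\<^sup>+x\<in>Q. g x \<partial>M) = ennreal I" "0 \<le> I"
    using finite(2) by (cases "\<integral>\<^sup>+x\<in>Q. g x \<partial>M") auto
  obtain m where m: "emeasure M Q = ennreal m" "0 \<le> m"
    using finite(1) by (cases "emeasure M Q") auto
  define E where "E = {x\<in>Q. 3 * ennreal I < g x * ennreal m}"
  have "3 * ennreal I = ennreal (3 * I)"
    using ennreal_mult[of 3 I] I(2) by simp
  then have E_eq: "E = {x\<in>Q. ennreal (3 * I) < g x * ennreal m}"
    by (simp add: E_def)
  consider "m = 0" | "I = 0" | "0 < I" "0 < m"
    using I m by linarith
  then have "emeasure M E \<le> ennreal (m / 3)"
  proof cases
    case 1
    then show ?thesis by (simp add: E_def)
  next
    case 2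
    have "E = {x\<in>space M. 3 * ennreal I < g x * ennreal m} \<inter> Q"
      using sets.sets_into_space[OF assms(2)] by (auto simp: E_def)
    then have E_sets: "E \<in> sets M"
      by simp
    have "AE x in M. g x * indicator Q x = 0"
      using I 2 by (subst nn_integral_0_iff_AE[symmetric]) auto
    then have "AE x in M. x \<notin> E"
      by eventually_elim (auto simp: E_def)
    moreover have "{x\<in>space M. \<not> x \<notin> E} = E"
      using sets.sets_into_space[OF E_sets] by auto
    ultimately show ?thesis
      using AE_iff_measurable[OF E_sets, of "\<lambda>x. x \<notin> E"] by simp
  next
    case 3
    then have "emeasure M E \<le> ennreal (m / (3 * I)) * ennreal I"
      unfolding E_eq using emeasure_less_mult_le[of g M Q "3 * I" m] I by simp
    also have "\<dots> = ennreal (m / 3)"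
      using 3 by (simp add: ennreal_mult[symmetric])
    finally show ?thesis .
  qed
  then have "3 * emeasure M E \<le> 3 * ennreal (m / 3)"
    by (rule mult_left_mono) simp
  also have "\<dots> = ennreal m"
    using ennreal_mult[of 3 "m / 3"] m by simp
  finally show ?thesis
    using I m by (simp add: E_def)
qed

lemma exists_point_below_three_averages:
  fixes g1 g2 :: "'a \<Rightarrow> ennreal"
  assumes [measurable]: "g1 \<in> borel_measurable M" "g2 \<in> borel_measurable M" "Q \<in> sets M"
    and Q: "0 < emeasure M Q" "emeasure M Q < \<infinity>"
    and finite: "(\<integral>\<^sup>+x\<in>Q. g1 x \<partial>M) < \<infinity>" "(\<integral>\<^sup>+x\<in>Q. g2 x \<partial>M) < \<infinity>"
  shows "\<exists>x\<in>Q. g1 x * emeasure M Q \<le> 3 * (\<integral>\<^sup>+x\<in>Q. g1 x \<partial>M) \<and>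
    g2 x * emeasure M Q \<le> 3 * (\<integral>\<^sup>+x\<in>Q. g2 x \<partial>M)"
proof (rule ccontr)
  define E where "E g = {x\<in>Q. 3 * (\<integral>\<^sup>+x\<in>Q. g x \<partial>M) < g x * emeasure M Q}" for g :: "'a \<Rightarrow> ennreal"
  have E_sets: "E g \<in> sets M" if [measurable]: "g \<in> borel_measurable M" for g
  proof -
    have "E g = {x\<in>space M. 3 * (\<integral>\<^sup>+x\<in>Q. g x \<partial>M) < g x * emeasure M Q} \<inter> Q"
      using sets.sets_into_space[OF assms(3)] by (auto simp: E_def)
    then show ?thesis by simp
  qed
  assume "\<not> ?thesis"
  then have "Q \<subseteq> E g1 \<union> E g2"
    by (auto simp: E_def not_le)
  then have "3 * emeasure M Q \<le> 3 * emeasure M (E g1) + 3 * emeasure M (E g2)"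
    using emeasure_subadditive[OF E_sets E_sets] emeasure_mono[of Q "E g1 \<union> E g2" M] E_sets
    by (metis assms(1,2) distrib_left mult_left_mono order_trans sets.Un zero_le)
  also have "\<dots> \<le> emeasure M Q + emeasure M Q"
    using emeasure_above_three_averages_le[OF assms(1,3) Q(2) finite(1)]
      emeasure_above_three_averages_le[OF assms(2,3) Q(2) finite(2)]
    unfolding E_def by (rule add_mono)
  finally have "3 * emeasure M Q \<le> 2 * emeasure M Q"
    by (simp add: mult_2)
  moreover obtain m where "emeasure M Q = ennreal m" "0 < m"
    using Q by (cases "emeasure M Q") auto
  ultimately have "ennreal (3 * m) \<le> ennreal (2 * m)"
    using ennreal_mult[of 3 m] ennreal_mult[of 2 m] by simp
  then show False
    using \<open>0 < m\<close> by simp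
qed

locale fractional_orlicz = orlicz G for G :: "real \<Rightarrow> real" +
  fixes s \<delta> :: real
  assumes s_pos: "0 < s" and \<delta>_pos: "0 < \<delta>"
begin

text \<open>Since \<open>r\<^sup>s \<le> 1\<close>, convexity gives \<open>G (r\<^sup>s t) \<le> r\<^sup>s G t\<close>; this is the only place where the
  fractional order \<open>s\<close> enters.\<close>

lemma G_diff_le_Psi_kernel:
  fixes f :: "'a::euclidean_space \<Rightarrow> real"
  assumes d: "d \<le> 1" "d < \<delta>" and xy: "dist x y \<le> d"
  shows "ennreal (G \<bar>f y - f x\<bar>) \<le> ennreal (d powr (s + DIM('a))) * Psi_kernel s G \<delta> f x y"
proof (cases "x = y")
  case False
  define r where "r = dist x y"
  define q where "q = \<bar>f x - f y\<bar> / r powr s"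
  have r: "0 < r" "r \<le> d" "r < \<delta>"
    using False xy d by (auto simp: r_def)
  have "G \<bar>f y - f x\<bar> = G (r powr s * q)"
    using r by (simp add: q_def abs_minus_commute)
  also have "\<dots> \<le> r powr s * G q"
    using r d s_pos by (intro scale_le) (auto simp: q_def intro!: powr_le1)
  also have "\<dots> = r powr (s + DIM('a)) * (G q / r ^ DIM('a))"
    using r by (simp add: powr_add powr_realpow)
  also have "\<dots> \<le> d powr (s + DIM('a)) * (G q / r ^ DIM('a))"
    using r s_pos nonneg[of q] by (intro mult_right_mono powr_mono2) (auto simp: q_def)
  finally show ?thesis
    using r nonneg[of q]
    by (simp add: Psi_kernel_def q_def r_def ennreal_mult[symmetric] dist_commute ennreal_leI)
qed simp

lemma Phi_on_diff_le_Psi_density: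
  fixes f :: "'a::euclidean_space \<Rightarrow> real"
  assumes [measurable]: "f \<in> borel_measurable lebesgue" "Q \<in> sets lebesgue"
    and d: "d \<le> 1" "d < \<delta>" and diam: "\<And>y. y \<in> Q \<Longrightarrow> dist x y \<le> d"
  shows "Phi_on Q G (\<lambda>y. f y - f x) \<le> ennreal (d powr (s + DIM('a))) * Psi_density s G \<delta> f x"
proof -
  have "Phi_on Q G (\<lambda>y. f y - f x) \<le>
      (\<integral>\<^sup>+y. ennreal (d powr (s + DIM('a))) * Psi_kernel s G \<delta> f x y \<partial>lebesgue)"
    unfolding Phi_on_def using G_diff_le_Psi_kernel[OF d diam]
    by (intro nn_integral_mono) (auto simp: indicator_def)
  also have "\<dots> = ennreal (d powr (s + DIM('a))) * Psi_density s G \<delta> f x"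
    unfolding Psi_density_def by (rule nn_integral_cmult) measurable
  finally show ?thesis .
qed

lemma exists_constant_approx:
  fixes f :: "'a::euclidean_space \<Rightarrow> real"
  assumes [measurable]: "f \<in> borel_measurable lebesgue" "Q \<in> sets lebesgue"
    and Q: "0 < \<mu>" "ennreal \<mu> \<le> emeasure lebesgue Q" "emeasure lebesgue Q < \<infinity>"
    and d: "d \<le> 1" "d < \<delta>" and diam: "\<And>x y. x \<in> Q \<Longrightarrow> y \<in> Q \<Longrightarrow> dist x y \<le> d"
    and finite: "Phi_on Q G f < \<infinity>" "(\<integral>\<^sup>+x\<in>Q. Psi_density s G \<delta> f x \<partial>lebesgue) < \<infinity>"
  shows "\<exists>a. ennreal (G \<bar>a\<bar> * \<mu>) \<le> 3 * Phi_on Q G f \<and>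
    Phi_on Q G (\<lambda>y. f y - a) \<le>
      ennreal (3 * d powr (s + DIM('a)) / \<mu>) * (\<integral>\<^sup>+x\<in>Q. Psi_density s G \<delta> f x \<partial>lebesgue)"
proof -
  define m where "m = emeasure lebesgue Q"
  define S where "S = (\<integral>\<^sup>+x\<in>Q. Psi_density s G \<delta> f x \<partial>lebesgue)"
  define D where "D = d powr (s + DIM('a))"
  have "0 < m"
    using Q unfolding m_def by (metis ennreal_less_zero_iff order_less_le_trans)
  moreover have "(\<lambda>x. ennreal (G \<bar>f x\<bar>)) \<in> borel_measurable lebesgue"
    by measurable
  ultimately have "\<exists>x\<in>Q. ennreal (G \<bar>f x\<bar>) * m \<le> 3 * Phi_on Q G f \<and> Psi_density s G \<delta> f x * m \<le> 3 * S"
    unfolding m_def S_def Phi_on_def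
    using Q(3) finite unfolding Phi_on_def
    by (intro exists_point_below_three_averages borel_measurable_Psi_density) auto
  then obtain x0 where x0: "x0 \<in> Q" "ennreal (G \<bar>f x0\<bar>) * m \<le> 3 * Phi_on Q G f"
    "Psi_density s G \<delta> f x0 * m \<le> 3 * S"
    by blast
  have "ennreal (G \<bar>f x0\<bar> * \<mu>) = ennreal (G \<bar>f x0\<bar>) * ennreal \<mu>"
    using nonneg[of "\<bar>f x0\<bar>"] Q by (simp add: ennreal_mult)
  also have "\<dots> \<le> ennreal (G \<bar>f x0\<bar>) * m"
    using Q unfolding m_def by (intro mult_left_mono) auto
  finally have approx_value: "ennreal (G \<bar>f x0\<bar> * \<mu>) \<le> 3 * Phi_on Q G f"
    using x0(2) by simp
  have "Phi_on Q G (\<lambda>y. f y - f x0) * ennreal \<mu> \<le> ennreal D * Psi_density s G \<delta> f x0 * m"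
    using Phi_on_diff_le_Psi_density[OF assms(1,2) d diam[OF x0(1)]] Q
    unfolding m_def D_def by (intro mult_mono) auto
  also have "\<dots> \<le> ennreal D * (3 * S)"
    using x0(3) by (simp add: mult.assoc mult_left_mono)
  also have "\<dots> = ennreal (3 * D) * S"
    using ennreal_mult[of 3 D] by (simp add: D_def mult_ac)
  finally have "Phi_on Q G (\<lambda>y. f y - f x0) \<le> ennreal (3 * D / \<mu>) * S"
    using Q(1) by (intro ennreal_le_divide_of_mult_le) (auto simp: D_def)
  then show ?thesis
    using approx_value unfolding D_def S_def by blast
qed

lemma exists_cube_constant:
  fixes f :: "'a::euclidean_space \<Rightarrow> real"
  assumes [measurable]: "f \<in> borel_measurable lebesgue"
    and bounded: "Phi G f \<le> 1" "Psi s G \<delta> f \<le> 1"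
    and e: "0 < e" "real DIM('a) * e \<le> 1" "real DIM('a) * e < \<delta>"
  shows "\<exists>a. G \<bar>a\<bar> \<le> 3 / e ^ DIM('a) \<and> Phi_on (cube e m) G (\<lambda>y. f y - a) \<le>
    ennreal (3 * real DIM('a) powr (s + DIM('a)) * e powr s) *
    (\<integral>\<^sup>+x\<in>cube e m. Psi_density s G \<delta> f x \<partial>lebesgue)"
proof -
  define \<mu> :: real where "\<mu> = e ^ DIM('a)"
  define d where "d = real DIM('a) * e"
  have \<mu>: "0 < \<mu>" "emeasure lebesgue (cube e m) = ennreal \<mu>"
    using e emeasure_cube[OF e(1)] by (simp_all only: \<mu>_def zero_less_power)
  have local_bounds: "Phi_on (cube e m) G f \<le> 1"
    "(\<integral>\<^sup>+x\<in>cube e m. Psi_density s G \<delta> f x \<partial>lebesgue) \<le> 1"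
    using order_trans[OF Phi_on_subset_le bounded(1)]
      order_trans[OF set_nn_integral_Psi_density_le bounded(2)] by auto
  then have "Phi_on (cube e m) G f < \<infinity>"
    "(\<integral>\<^sup>+x\<in>cube e m. Psi_density s G \<delta> f x \<partial>lebesgue) < \<infinity>"
    by (auto intro: le_less_trans[OF _ ennreal_one_less_top])
  moreover have "dist x y \<le> d" if "x \<in> cube e m" "y \<in> cube e m" for x y
    using dist_cube_le[OF that] by (simp add: d_def)
  moreover have "d \<le> 1" "d < \<delta>" "ennreal \<mu> \<le> emeasure lebesgue (cube e m)"
    "emeasure lebesgue (cube e m) < \<infinity>"
    using e \<mu>(2) by (simp_all add: d_def)
  ultimately obtain a where a: "ennreal (G \<bar>a\<bar> * \<mu>) \<le> 3 * Phi_on (cube e m) G f"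
    "Phi_on (cube e m) G (\<lambda>y. f y - a) \<le> ennreal (3 * d powr (s + DIM('a)) / \<mu>) *
      (\<integral>\<^sup>+x\<in>cube e m. Psi_density s G \<delta> f x \<partial>lebesgue)"
    using exists_constant_approx[OF assms(1) sets_cube \<mu>(1)] by blast
  have "ennreal (G \<bar>a\<bar> * \<mu>) \<le> 3 * 1"
    using a(1) mult_left_mono[OF local_bounds(1), of 3] by (rule order_trans) simp
  then have "G \<bar>a\<bar> \<le> 3 / \<mu>"
    using \<mu>(1) by (simp add: le_divide_eq ennreal_le_iff[symmetric] del: ennreal_le_iff)
  moreover have "3 * d powr (s + DIM('a)) / \<mu> = 3 * real DIM('a) powr (s + DIM('a)) * e powr s"
    using e by (simp add: d_def \<mu>_def powr_mult powr_add powr_realpow)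
  ultimately show ?thesis
    using a(2) unfolding \<mu>_def by auto
qed

lemma exists_cube_constants:
  fixes g :: "nat \<Rightarrow> 'a::euclidean_space \<Rightarrow> real"
  assumes "0 < G 1" and [measurable]: "\<And>k. g k \<in> borel_measurable lebesgue"
    and bounded: "\<And>k. Phi G (g k) \<le> 1" "\<And>k. Psi s G \<delta> (g k) \<le> 1"
    and e: "0 < e" "real DIM('a) * e \<le> 1" "real DIM('a) * e < \<delta>"
  obtains A :: "nat \<Rightarrow> ('a \<Rightarrow> int) \<Rightarrow> real" and B where "\<And>k m. \<bar>A k m\<bar> \<le> B"
    "\<And>k m. Phi_on (cube e m) G (\<lambda>y. g k y - A k m) \<le>
      ennreal (3 * real DIM('a) powr (s + DIM('a)) * e powr s) *
      (\<integral>\<^sup>+x\<in>cube e m. Psi_density s G \<delta> (g k) x \<partial>lebesgue)"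
proof -
  define A where "A k m = (SOME a. G \<bar>a\<bar> \<le> 3 / e ^ DIM('a) \<and> Phi_on (cube e m) G (\<lambda>y. g k y - a) \<le>
      ennreal (3 * real DIM('a) powr (s + DIM('a)) * e powr s) *
      (\<integral>\<^sup>+x\<in>cube e m. Psi_density s G \<delta> (g k) x \<partial>lebesgue))" for k m
  have A: "G \<bar>A k m\<bar> \<le> 3 / e ^ DIM('a) \<and> Phi_on (cube e m) G (\<lambda>y. g k y - A k m) \<le>
      ennreal (3 * real DIM('a) powr (s + DIM('a)) * e powr s) *
      (\<integral>\<^sup>+x\<in>cube e m. Psi_density s G \<delta> (g k) x \<partial>lebesgue)" for k m
    unfolding A_def by (rule someI_ex) (rule exists_cube_constant[OF assms(2) bounded e])
  then have "\<bar>A k m\<bar> \<le> max 1 (3 / e ^ DIM('a) / G 1)" for k m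
    using abs_le_of_G_abs_le[OF \<open>0 < G 1\<close>] by blast
  then show ?thesis
    using A that by blast
qed

lemma sum_cube_approx_errors_le:
  fixes f :: "'a::euclidean_space \<Rightarrow> real"
  assumes [measurable]: "f \<in> borel_measurable lebesgue" and "e > 0"
    and approx: "\<And>m. m \<in> cube_indices e R \<Longrightarrow> Phi_on (cube e m) G (\<lambda>y. f y - a m) \<le>
      ennreal ka * (\<integral>\<^sup>+x\<in>cube e m. Psi_density s G \<delta> f x \<partial>lebesgue)"
    and "Psi s G \<delta> f \<le> 1"
  shows "(\<Sum>m\<in>cube_indices e R. Phi_on (cube e m) G (\<lambda>y. f y - a m)) \<le> ennreal ka"
proof -
  have "(\<Sum>m\<in>cube_indices e R. Phi_on (cube e m) G (\<lambda>y. f y - a m)) \<le>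
      ennreal ka * (\<Sum>m\<in>cube_indices e R. \<integral>\<^sup>+x\<in>cube e m. Psi_density s G \<delta> f x \<partial>lebesgue)"
    unfolding sum_distrib_left by (intro sum_mono approx)
  also have "\<dots> \<le> ennreal ka * Psi s G \<delta> f"
    unfolding Psi_eq_nn_integral_density using assms(2)
    by (intro mult_left_mono sum_set_nn_integral_le finite_cube_indices disjoint_family_cube_indices) auto
  also have "\<dots> \<le> ennreal ka"
    using mult_left_mono[OF assms(4), of "ennreal ka"] by simp
  finally show ?thesis .
qed

lemma Phi_on_cball_diff_le:
  fixes f1 f2 :: "'a::euclidean_space \<Rightarrow> real" and a1 a2 :: "('a \<Rightarrow> int) \<Rightarrow> real"
  assumes [measurable]: "f1 \<in> borel_measurable lebesgue" "f2 \<in> borel_measurable lebesgue"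
    and e: "0 < e" and "0 \<le> ka" "0 \<le> \<eta>"
    and approx1: "\<And>m. m \<in> cube_indices e R \<Longrightarrow> Phi_on (cube e m) G (\<lambda>y. f1 y - a1 m) \<le>
      ennreal ka * (\<integral>\<^sup>+x\<in>cube e m. Psi_density s G \<delta> f1 x \<partial>lebesgue)"
    and approx2: "\<And>m. m \<in> cube_indices e R \<Longrightarrow> Phi_on (cube e m) G (\<lambda>y. f2 y - a2 m) \<le>
      ennreal ka * (\<integral>\<^sup>+x\<in>cube e m. Psi_density s G \<delta> f2 x \<partial>lebesgue)"
    and "Psi s G \<delta> f1 \<le> 1" "Psi s G \<delta> f2 \<le> 1"
    and close: "\<And>m. m \<in> cube_indices e R \<Longrightarrow> G \<bar>a1 m - a2 m\<bar> \<le> \<eta>"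
  shows "Phi_on (cball 0 R) G (\<lambda>x. f1 x - f2 x) \<le> ennreal (doubling_const ^ 2 *
    (2 * ka + real (card (cube_indices e R :: ('a \<Rightarrow> int) set)) * \<eta> * e ^ DIM('a)))"
proof -
  define I where "I = (cube_indices e R :: ('a \<Rightarrow> int) set)"
  define E1 where "E1 = (\<Sum>m\<in>I. Phi_on (cube e m) G (\<lambda>x. f1 x - a1 m))"
  define E2 where "E2 = (\<Sum>m\<in>I. Phi_on (cube e m) G (\<lambda>x. f2 x - a2 m))"
  have sum_const: "(\<Sum>m\<in>I. ennreal (\<eta> * e ^ DIM('a))) = ennreal (real (card I) * (\<eta> * e ^ DIM('a)))"
    using \<open>0 \<le> \<eta>\<close> e by (simp add: ennreal_mult ennreal_of_nat_eq_real_of_nat)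
  have "Phi_on (cball 0 R) G (\<lambda>x. f1 x - f2 x) \<le> (\<Sum>m\<in>I. Phi_on (cube e m) G (\<lambda>x. f1 x - f2 x))"
    unfolding Phi_on_def I_def
    by (intro set_nn_integral_le_sum_cover finite_cube_indices cball_subset_cubes e) auto
  also have "\<dots> \<le> (\<Sum>m\<in>I. ennreal (doubling_const ^ 2) * (Phi_on (cube e m) G (\<lambda>x. f1 x - a1 m) +
      ennreal (\<eta> * e ^ DIM('a)) + Phi_on (cube e m) G (\<lambda>x. f2 x - a2 m)))"
  proof (rule sum_mono)
    fix m assume "m \<in> I"
    then have "ennreal (G \<bar>a1 m - a2 m\<bar>) * emeasure lebesgue (cube e m) \<le> ennreal (\<eta> * e ^ DIM('a))"
      unfolding emeasure_cube[OF e] using close[of m] nonneg e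
      by (simp add: I_def ennreal_mult[symmetric] mult_right_mono ennreal_leI)
    then show "Phi_on (cube e m) G (\<lambda>x. f1 x - f2 x) \<le> ennreal (doubling_const ^ 2) *
        (Phi_on (cube e m) G (\<lambda>x. f1 x - a1 m) + ennreal (\<eta> * e ^ DIM('a)) +
         Phi_on (cube e m) G (\<lambda>x. f2 x - a2 m))"
      using Phi_on_diff_le[of f1 f2 "cube e m" "a1 m" "a2 m"]
      by (auto elim!: order_trans intro!: mult_left_mono add_mono)
  qed
  also have "\<dots> = ennreal (doubling_const ^ 2) * (E1 + ennreal (real (card I) * (\<eta> * e ^ DIM('a))) + E2)"
    unfolding E1_def E2_def sum_const[symmetric] sum_distrib_left[symmetric] sum.distrib ..
  also have "\<dots> \<le> ennreal (doubling_const ^ 2) * (ennreal ka + ennreal (real (card I) * (\<eta> * e ^ DIM('a))) + ennreal ka)"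
    unfolding E1_def E2_def I_def using assms
    by (intro mult_left_mono add_mono sum_cube_approx_errors_le order_refl) auto
  also have "\<dots> = ennreal (doubling_const ^ 2 * (2 * ka + real (card I) * \<eta> * e ^ DIM('a)))"
    using assms e by (simp add: ennreal_mult[symmetric] ennreal_plus[symmetric] algebra_simps del: ennreal_plus)
  finally show ?thesis
    unfolding I_def .
qed

end

section \<open>Subsequences that are Cauchy in modular\<close>

lemma mult_divide_add_one_le:
  assumes "0 < \<mu>" "0 \<le> c"
  shows "real n * (c / (\<mu> * (real n + 1))) * \<mu> \<le> c"
proof -
  have "real n * (c / (\<mu> * (real n + 1))) * \<mu> = c * (real n / (real n + 1))"
    using assms by (simp add: divide_simps)
  also have "\<dots> \<le> c"
    using assms by (intro mult_left_le) auto
  finally show ?thesis .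
qed

lemma bounded_finite_family_convergent_subseq:
  fixes X :: "nat \<Rightarrow> 'i \<Rightarrow> real"
  assumes "finite I" "\<And>k i. i \<in> I \<Longrightarrow> \<bar>X k i\<bar> \<le> B"
  obtains r where "strict_mono r" "\<And>i. i \<in> I \<Longrightarrow> convergent (\<lambda>k. X (r k) i)"
proof -
  have "\<exists>r. strict_mono r \<and> (\<forall>i\<in>I. convergent (\<lambda>k. X (r k) i))"
    using assms
  proof (induction I rule: finite_induct)
    case empty
    show ?case by (intro exI[of _ id]) (auto simp: strict_mono_def)
  next
    case (insert i I)
    then obtain r where r: "strict_mono r" "\<forall>j\<in>I. convergent (\<lambda>k. X (r k) j)"
      by auto
    obtain t where t: "strict_mono t" "monoseq (\<lambda>n. X (r (t n)) i)"
      using seq_monosub[of "\<lambda>n. X (r n) i"] by blast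
    have "convergent (\<lambda>n. X (r (t n)) i)"
      using insert.prems by (intro Bseq_monoseq_convergent[OF BseqI'[of _ B] t(2)]) auto
    moreover have "convergent (\<lambda>k. X (r (t k)) j)" if "j \<in> I" for j
      using convergent_subseq_convergent[OF r(2)[rule_format, OF that] t(1)] by (simp add: o_def)
    ultimately show ?case
      using strict_mono_o[OF r(1) t(1)] unfolding comp_def by (intro exI[of _ "\<lambda>k. r (t k)"]) auto
  qed
  then show ?thesis
    using that by blast
qed

definition Phi_on_cauchy_le :: "(real \<Rightarrow> real) \<Rightarrow> 'a::euclidean_space set \<Rightarrow> real \<Rightarrow> (nat \<Rightarrow> 'a \<Rightarrow> real) \<Rightarrow> bool"
  where "Phi_on_cauchy_le G A \<epsilon> f \<longleftrightarrow> (\<exists>J. \<forall>j\<ge>J. \<forall>k\<ge>J. Phi_on A G (\<lambda>x. f j x - f k x) \<le> ennreal \<epsilon>)"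

lemma Phi_on_cauchy_le_subseq:
  assumes "strict_mono r" "Phi_on_cauchy_le G A \<epsilon> f"
  shows "Phi_on_cauchy_le G A \<epsilon> (\<lambda>k. f (r k))"
  using assms seq_suble[OF assms(1)] unfolding Phi_on_cauchy_le_def by (meson order_trans)

lemma Phi_on_cauchy_le_mono:
  assumes "A \<subseteq> B" "\<epsilon> \<le> \<epsilon>'" "Phi_on_cauchy_le G B \<epsilon> f"
  shows "Phi_on_cauchy_le G A \<epsilon>' f"
  using assms Phi_on_subset_le[OF assms(1)] unfolding Phi_on_cauchy_le_def
  by (meson ennreal_leI order_trans)

lemma Phi_on_cauchy_le_shift:
  assumes "Phi_on_cauchy_le G A \<epsilon> (\<lambda>k. f (m + k))"
  shows "Phi_on_cauchy_le G A \<epsilon> f"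
proof -
  obtain J where J: "\<And>j k. J \<le> j \<Longrightarrow> J \<le> k \<Longrightarrow> Phi_on A G (\<lambda>x. f (m + j) x - f (m + k) x) \<le> ennreal \<epsilon>"
    using assms unfolding Phi_on_cauchy_le_def by blast
  have "Phi_on A G (\<lambda>x. f j x - f k x) \<le> ennreal \<epsilon>" if "m + J \<le> j" "m + J \<le> k" for j k
    using J[of "j - m" "k - m"] that by simp
  then show ?thesis
    unfolding Phi_on_cauchy_le_def by blast
qed

definition locally_modular_cauchy :: "(real \<Rightarrow> real) \<Rightarrow> (nat \<Rightarrow> 'a::euclidean_space \<Rightarrow> real) \<Rightarrow> bool"
  where "locally_modular_cauchy G f \<longleftrightarrow> (\<forall>R \<epsilon>. 0 < \<epsilon> \<longrightarrow> Phi_on_cauchy_le G (cball 0 R) \<epsilon> f)"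

lemma locally_modular_cauchy_subseq:
  "strict_mono r \<Longrightarrow> locally_modular_cauchy G f \<Longrightarrow> locally_modular_cauchy G (\<lambda>k. f (r k))"
  unfolding locally_modular_cauchy_def by (blast intro: Phi_on_cauchy_le_subseq)

lemma diagonal_locally_modular_cauchy:
  fixes f :: "nat \<Rightarrow> 'a::euclidean_space \<Rightarrow> real" and C :: "nat \<Rightarrow> real"
  assumes refine: "\<And>n (t :: nat \<Rightarrow> nat). strict_mono t \<Longrightarrow>
      \<exists>r. strict_mono r \<and> Phi_on_cauchy_le G (cball 0 (real n)) (C n) (\<lambda>k. f (t (r k)))"
    and C: "C \<longlonglongrightarrow> 0"
  shows "\<exists>r. strict_mono r \<and> locally_modular_cauchy G (\<lambda>k. f (r k))"
proof -
  define P where "P n t \<longleftrightarrow> Phi_on_cauchy_le G (cball 0 (real n)) (C n) (\<lambda>k. f (t k))" for n t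
  interpret subseqs P
  proof
    fix n and t :: "nat \<Rightarrow> nat"
    assume "strict_mono t"
    then show "\<exists>r. strict_mono r \<and> P n (t \<circ> r)"
      unfolding P_def comp_def by (rule refine)
  qed
  have diag: "Phi_on_cauchy_le G (cball 0 (real n)) (C n) (\<lambda>k. f (diagseq k))" for n
  proof -
    have "P n (diagseq \<circ> (+) (Suc n))"
      by (rule diagseq_holds) (auto simp: P_def comp_def intro: Phi_on_cauchy_le_subseq)
    then show ?thesis
      using Phi_on_cauchy_le_shift[of G "cball 0 (real n)" "C n" "\<lambda>k. f (diagseq k)" "Suc n"]
      by (simp add: P_def comp_def)
  qed
  have "Phi_on_cauchy_le G (cball 0 R) \<epsilon> (\<lambda>k. f (diagseq k))" if "0 < \<epsilon>" for R \<epsilon>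
  proof -
    have "eventually (\<lambda>n. C n < \<epsilon> \<and> R \<le> real n) sequentially"
      using order_tendstoD(2)[OF C that] eventually_ge_at_top[of "nat \<lceil>R\<rceil>"]
      by eventually_elim (use real_nat_ceiling_ge[of R] in linarith)
    then obtain N where "\<forall>n\<ge>N. C n < \<epsilon> \<and> R \<le> real n"
      unfolding eventually_sequentially by blast
    then have "cball 0 R \<subseteq> cball (0::'a) (real N)" "C N \<le> \<epsilon>"
      by auto
    then show ?thesis
      by (rule Phi_on_cauchy_le_mono[OF _ _ diag[of N]])
  qed
  then show ?thesis
    using subseq_diagseq unfolding locally_modular_cauchy_def by blast
qed

context fractional_orlicz
begin

lemma exists_subseq_Phi_on_cauchy_le:
  fixes g :: "nat \<Rightarrow> 'a::euclidean_space \<Rightarrow> real"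
  assumes G1: "0 < G 1" and [measurable]: "\<And>k. g k \<in> borel_measurable lebesgue"
    and bounded: "\<And>k. Phi G (g k) \<le> 1" "\<And>k. Psi s G \<delta> (g k) \<le> 1"
    and e: "0 < e" "real DIM('a) * e \<le> 1" "real DIM('a) * e < \<delta>"
  shows "\<exists>r. strict_mono r \<and> Phi_on_cauchy_le G (cball 0 R)
    (doubling_const ^ 2 * (6 * real DIM('a) powr (s + DIM('a)) + 1) * e powr s) (\<lambda>k. g (r k))"
proof -
  define I where "I = (cube_indices e R :: ('a \<Rightarrow> int) set)"
  define ka where "ka = 3 * real DIM('a) powr (s + DIM('a)) * e powr s"
  define \<eta> where "\<eta> = e powr s / (e ^ DIM('a) * (real (card I) + 1))"
  obtain A :: "nat \<Rightarrow> ('a \<Rightarrow> int) \<Rightarrow> real" and B where A: "\<And>k m. \<bar>A k m\<bar> \<le> B"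
    "\<And>k m. Phi_on (cube e m) G (\<lambda>y. g k y - A k m) \<le>
      ennreal (3 * real DIM('a) powr (s + DIM('a)) * e powr s) *
      (\<integral>\<^sup>+x\<in>cube e m. Psi_density s G \<delta> (g k) x \<partial>lebesgue)"
    using exists_cube_constants[where g=g and e=e, OF G1 assms(2) bounded e] by blast
  have "finite I"
    by (simp add: I_def finite_cube_indices)
  obtain r where r: "strict_mono r" "\<And>m. m \<in> I \<Longrightarrow> convergent (\<lambda>k. A (r k) m)"
    using bounded_finite_family_convergent_subseq[where X=A and I=I and B=B, OF \<open>finite I\<close> A(1)]
    by blast
  have \<eta>: "0 < \<eta>"
    using e by (simp add: \<eta>_def)
  obtain J where J: "\<forall>j\<ge>J. \<forall>k\<ge>J. \<forall>m\<in>I. G \<bar>A (r j) m - A (r k) m\<bar> < \<eta>"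
    using eventually_G_diff_less[where Y="\<lambda>k m. A (r k) m" and I=I, OF \<open>finite I\<close> r(2) \<eta>]
    by blast
  have "real (card I) * \<eta> * e ^ DIM('a) \<le> e powr s"
    using mult_divide_add_one_le[of "e ^ DIM('a)" "e powr s" "card I"] e by (simp add: \<eta>_def)
  then have "2 * ka + real (card I) * \<eta> * e ^ DIM('a) \<le> (6 * real DIM('a) powr (s + DIM('a)) + 1) * e powr s"
    by (simp add: ka_def algebra_simps)
  then have "doubling_const ^ 2 * (2 * ka + real (card I) * \<eta> * e ^ DIM('a)) \<le>
      doubling_const ^ 2 * (6 * real DIM('a) powr (s + DIM('a)) + 1) * e powr s"
    unfolding mult.assoc by (rule mult_left_mono) simp
  moreover have "Phi_on (cball 0 R) G (\<lambda>x. g (r j) x - g (r k) x) \<le>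
      ennreal (doubling_const ^ 2 * (2 * ka + real (card I) * \<eta> * e ^ DIM('a)))"
    if "J \<le> j" "J \<le> k" for j k
    unfolding I_def
  proof (rule Phi_on_cball_diff_le)
    show "G \<bar>A (r j) m - A (r k) m\<bar> \<le> \<eta>" if "m \<in> cube_indices e R" for m
      using J \<open>J \<le> j\<close> \<open>J \<le> k\<close> that by (auto simp: I_def less_imp_le)
  qed (use A(2) bounded \<eta> e in \<open>auto simp: ka_def\<close>)
  ultimately show ?thesis
    unfolding Phi_on_cauchy_le_def using r(1) by (blast intro: order_trans ennreal_leI)
qed

lemma exists_locally_modular_cauchy_subseq:
  fixes f :: "nat \<Rightarrow> 'a::euclidean_space \<Rightarrow> real"
  assumes G1: "0 < G 1" and [measurable]: "\<And>k. f k \<in> borel_measurable lebesgue"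
    and bounded: "\<And>k. Phi G (f k) \<le> 1" "\<And>k. Psi s G \<delta> (f k) \<le> 1"
  shows "\<exists>r. strict_mono r \<and> locally_modular_cauchy G (\<lambda>k. f (r k))"
proof -
  define c where "c = min 1 (\<delta> / 2)"
  define e where "e n = c / (real DIM('a) * real (Suc n))" for n
  have c: "0 < c" "c \<le> 1" "c < \<delta>"
    using \<delta>_pos by (auto simp: c_def)
  have e: "0 < e n" "real DIM('a) * e n \<le> 1" "real DIM('a) * e n < \<delta>" for n
  proof -
    have "real DIM('a) * e n = c / real (Suc n)"
      by (simp add: e_def)
    also have "\<dots> \<le> c / 1"
      using c by (intro divide_left_mono) auto
    finally show "real DIM('a) * e n \<le> 1" "real DIM('a) * e n < \<delta>"
      using c by auto
    show "0 < e n"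
      using c by (simp add: e_def)
  qed
  have "e = (\<lambda>n. c / real DIM('a) * inverse (real (Suc n)))"
    by (simp add: e_def field_simps fun_eq_iff)
  then have "e \<longlonglongrightarrow> 0"
    using tendsto_mult_right_zero[OF LIMSEQ_inverse_real_of_nat] by simp
  then have "(\<lambda>n. e n powr s) \<longlonglongrightarrow> 0"
    using e(1) s_pos by (intro tendsto_zero_powrI) (auto intro: always_eventually less_imp_le)
  then have "(\<lambda>n. doubling_const ^ 2 * (6 * real DIM('a) powr (s + DIM('a)) + 1) * e n powr s) \<longlonglongrightarrow> 0"
    by (intro tendsto_mult_right_zero)
  then show ?thesis
    using exists_subseq_Phi_on_cauchy_le[OF G1 _ bounded e]
    by (intro diagonal_locally_modular_cauchy) auto
qed

end

section \<open>Limits\<close>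

lemma convergent_if_increments_le_geometric:
  fixes a :: "nat \<Rightarrow> real"
  assumes "eventually (\<lambda>i. norm (a (Suc i) - a i) \<le> (1/2) ^ i) sequentially"
  shows "convergent a"
proof -
  have "summable (\<lambda>i. a (Suc i) - a i)"
    using assms by (rule summable_comparison_test_ev[OF _ summable_geometric]) simp
  then have "convergent (\<lambda>m. (\<Sum>i<m. a (Suc i) - a i) + a 0)"
    by (intro convergent_add convergent_const summable_iff_convergent[THEN iffD1])
  then show ?thesis
    using sum_lessThan_telescope[of a] by simp
qed

lemma ae_convergent_of_small_increments:
  fixes h :: "nat \<Rightarrow> 'a::euclidean_space \<Rightarrow> real"
  assumes [measurable]: "\<And>i. h i \<in> borel_measurable lebesgue"
    and small: "\<And>i. emeasure lebesgue {x \<in> cball 0 (real i). (1/2) ^ i < \<bar>h (Suc i) x - h i x\<bar>}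
      \<le> ennreal ((1/2) ^ i)"
  shows "AE x in lebesgue. convergent (\<lambda>i. h i x)"
proof -
  define E where "E i = {x \<in> cball 0 (real i). (1/2) ^ i < \<bar>h (Suc i) x - h i x\<bar>}" for i
  have [measurable]: "cball (0::'a) r \<in> sets lebesgue" for r
    by (rule sets_completionI_sets) (simp add: borel_closed)
  have E_sets [measurable]: "E i \<in> sets lebesgue" for i
  proof -
    have "E i = {x\<in>space lebesgue. (1/2) ^ i < \<bar>h (Suc i) x - h i x\<bar>} \<inter> cball 0 (real i)"
      by (auto simp: E_def)
    then show ?thesis by simp
  qed
  have E_finite: "emeasure lebesgue (E i) < \<infinity>" for i
    unfolding E_def by (rule le_less_trans[OF small]) simp
  have "measure lebesgue (E i) \<le> (1/2) ^ i" for i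
  proof -
    have "emeasure lebesgue (E i) = ennreal (measure lebesgue (E i))"
      using E_finite[of i] by (intro emeasure_eq_ennreal_measure) auto
    then have "ennreal (measure lebesgue (E i)) \<le> ennreal ((1/2) ^ i)"
      using small[of i, folded E_def] by simp
    then show ?thesis
      by simp
  qed
  then have "summable (\<lambda>i. measure lebesgue (E i))"
    by (intro summable_comparison_test[OF _ summable_geometric[of "1/2::real"]]) auto
  then have "AE x in lebesgue. eventually (\<lambda>i. x \<in> space lebesgue - E i) sequentially"
    by (rule borel_cantelli_AE1[OF E_sets E_finite])
  then show ?thesis
  proof eventually_elim
    case (elim x)
    with eventually_ge_at_top[of "nat \<lceil>norm x\<rceil>"]
    have "eventually (\<lambda>i. norm (h (Suc i) x - h i x) \<le> (1/2) ^ i) sequentially"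
    proof eventually_elim
      case (elim i)
      then have "x \<in> cball 0 (real i)"
        using real_nat_ceiling_ge[of "norm x"] by simp
      then show ?case
        using elim(2) by (auto simp: E_def)
    qed
    then show ?case
      by (rule convergent_if_increments_le_geometric)
  qed
qed

lemma nn_integral_le_liminf_AE:
  fixes u :: "nat \<Rightarrow> 'a \<Rightarrow> ennreal"
  assumes "\<And>i. u i \<in> borel_measurable M" "AE x in M. v x \<le> liminf (\<lambda>i. u i x)"
  shows "integral\<^sup>N M v \<le> liminf (\<lambda>i. integral\<^sup>N M (u i))"
  using nn_integral_mono_AE[OF assms(2)] nn_integral_liminf[OF assms(1)] by (rule order_trans)

definition locally_modular_tendsto ::
    "(real \<Rightarrow> real) \<Rightarrow> (nat \<Rightarrow> 'a::euclidean_space \<Rightarrow> real) \<Rightarrow> ('a \<Rightarrow> real) \<Rightarrow> bool"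
  where "locally_modular_tendsto G f z \<longleftrightarrow>
    (\<forall>R \<epsilon>. 0 < \<epsilon> \<longrightarrow> (\<exists>J. \<forall>k\<ge>J. Phi_on (cball 0 R) G (\<lambda>x. f k x - z x) \<le> ennreal \<epsilon>))"

context orlicz
begin

lemma emeasure_abs_gt_le_Phi_on:
  assumes [measurable]: "f \<in> borel_measurable lebesgue" "A \<in> sets lebesgue"
    and t: "0 \<le> t" "0 < G t"
  shows "emeasure lebesgue {x \<in> A. t < \<bar>f x\<bar>} \<le> ennreal (1 / G t) * Phi_on A G f"
proof -
  have "{x \<in> A. t < \<bar>f x\<bar>} \<subseteq> {x \<in> A. 1 \<le> ennreal (1 / G t) * ennreal (G \<bar>f x\<bar>)}"
  proof safe
    fix x assume "t < \<bar>f x\<bar>"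
    then have "1 \<le> (1 / G t) * G \<bar>f x\<bar>"
      using mono[of t "\<bar>f x\<bar>"] t by (simp add: field_simps)
    then show "1 \<le> ennreal (1 / G t) * ennreal (G \<bar>f x\<bar>)"
      using t by (simp add: ennreal_mult[symmetric] ennreal_1[symmetric] del: ennreal_1)
  qed
  moreover have "{x \<in> A. 1 \<le> ennreal (1 / G t) * ennreal (G \<bar>f x\<bar>)} =
      {x \<in> space lebesgue. 1 \<le> ennreal (1 / G t) * ennreal (G \<bar>f x\<bar>)} \<inter> A"
    using sets.sets_into_space[OF assms(2)] by auto
  ultimately have "emeasure lebesgue {x \<in> A. t < \<bar>f x\<bar>} \<le>
      emeasure lebesgue {x \<in> A. 1 \<le> ennreal (1 / G t) * ennreal (G \<bar>f x\<bar>)}"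
    by (intro emeasure_mono) auto
  also have "\<dots> \<le> ennreal (1 / G t) * Phi_on A G f"
    unfolding Phi_on_def by (rule nn_integral_Markov_inequality) auto
  finally show ?thesis .
qed

lemma locally_modular_cauchy_imp_ae_convergent_subseq:
  fixes f :: "nat \<Rightarrow> 'a::euclidean_space \<Rightarrow> real"
  assumes pos: "\<And>t. 0 < t \<Longrightarrow> 0 < G t" and [measurable]: "\<And>k. f k \<in> borel_measurable lebesgue"
    and cauchy: "locally_modular_cauchy G f"
  shows "\<exists>t. strict_mono t \<and> (AE x in lebesgue. convergent (\<lambda>i. f (t i) x))"
proof -
  define \<epsilon> where "\<epsilon> i = G ((1/2) ^ i) * (1/2) ^ i" for i :: nat
  have "0 < \<epsilon> i" for i
    using pos[of "(1/2) ^ i"] by (simp add: \<epsilon>_def)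
  then have "\<exists>J. \<forall>j\<ge>J. \<forall>k\<ge>J. Phi_on (cball 0 (real i)) G (\<lambda>x. f j x - f k x) \<le> ennreal (\<epsilon> i)" for i
    using cauchy unfolding locally_modular_cauchy_def Phi_on_cauchy_le_def by blast
  then obtain J where J: "\<And>i j k. J i \<le> j \<Longrightarrow> J i \<le> k \<Longrightarrow>
      Phi_on (cball 0 (real i)) G (\<lambda>x. f j x - f k x) \<le> ennreal (\<epsilon> i)"
    by metis
  define t where "t i = (\<Sum>l\<le>i. J l) + i" for i
  have t_ge: "J i \<le> t i" for i
    unfolding t_def by (simp add: member_le_sum trans_le_add1)
  have t_Suc: "t (Suc i) = t i + J (Suc i) + 1" for i
    by (simp add: t_def)
  have "strict_mono t"
    unfolding strict_mono_Suc_iff using t_Suc by simp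
  moreover have "AE x in lebesgue. convergent (\<lambda>i. f (t i) x)"
  proof (rule ae_convergent_of_small_increments)
    fix i
    have [measurable]: "cball (0::'a) (real i) \<in> sets lebesgue"
      by (rule sets_completionI_sets) (simp add: borel_closed)
    have "emeasure lebesgue {x \<in> cball 0 (real i). (1/2) ^ i < \<bar>f (t (Suc i)) x - f (t i) x\<bar>}
        \<le> ennreal (1 / G ((1/2) ^ i)) * Phi_on (cball 0 (real i)) G (\<lambda>x. f (t (Suc i)) x - f (t i) x)"
      using pos[of "(1/2) ^ i"] by (intro emeasure_abs_gt_le_Phi_on) auto
    also have "\<dots> \<le> ennreal (1 / G ((1/2) ^ i)) * ennreal (\<epsilon> i)"
      using t_ge[of i] t_Suc[of i] by (intro mult_left_mono J) auto
    also have "\<dots> = ennreal ((1/2) ^ i)"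
      using pos[of "(1/2) ^ i"] by (simp add: \<epsilon>_def ennreal_mult[symmetric])
    finally show "emeasure lebesgue {x \<in> cball 0 (real i). (1/2) ^ i < \<bar>f (t (Suc i)) x - f (t i) x\<bar>}
        \<le> ennreal ((1/2) ^ i)" .
  qed simp
  ultimately show ?thesis
    by blast
qed

lemma Phi_on_le_liminf:
  assumes [measurable]: "\<And>i. f i \<in> borel_measurable lebesgue" "A \<in> sets lebesgue"
    and lim: "AE x in lebesgue. (\<lambda>i. f i x) \<longlonglongrightarrow> z x"
  shows "Phi_on A G z \<le> liminf (\<lambda>i. Phi_on A G (f i))"
  unfolding Phi_on_def
proof (rule nn_integral_le_liminf_AE)
  show "AE x in lebesgue. ennreal (G \<bar>z x\<bar>) * indicator A x \<le>
      liminf (\<lambda>i. ennreal (G \<bar>f i x\<bar>) * indicator A x)"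
    using lim
  proof eventually_elim
    case (elim x)
    then have "(\<lambda>i. ennreal (G \<bar>f i x\<bar>) * indicator A x) \<longlonglongrightarrow> ennreal (G \<bar>z x\<bar>) * indicator A x"
      by (cases "x \<in> A") (auto intro!: tendsto_ennrealI tendsto_abs)
    then show ?case
      by (simp add: lim_imp_Liminf)
  qed
qed simp

lemma tendsto_Psi_kernel:
  fixes f :: "nat \<Rightarrow> 'a::euclidean_space \<Rightarrow> real"
  assumes "(\<lambda>i. f i x) \<longlonglongrightarrow> z x" "(\<lambda>i. f i y) \<longlonglongrightarrow> z y"
  shows "(\<lambda>i. Psi_kernel s G \<delta> (f i) x y) \<longlonglongrightarrow> Psi_kernel s G \<delta> z x y"
proof -
  have "(\<lambda>i. (f i x - f i y) * inverse (dist x y powr s)) \<longlonglongrightarrow> (z x - z y) * inverse (dist x y powr s)"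
    by (intro tendsto_mult_right tendsto_diff assms)
  then have "(\<lambda>i. G \<bar>(f i x - f i y) * inverse (dist x y powr s)\<bar> * inverse (dist x y ^ DIM('a))) \<longlonglongrightarrow>
      G \<bar>(z x - z y) * inverse (dist x y powr s)\<bar> * inverse (dist x y ^ DIM('a))"
    by (rule tendsto_mult_right[OF tendsto_abs])
  then have "(\<lambda>i. ennreal (G \<bar>(f i x - f i y) * inverse (dist x y powr s)\<bar> * inverse (dist x y ^ DIM('a)))
      * indicator (ball x \<delta>) y) \<longlonglongrightarrow>
      ennreal (G \<bar>(z x - z y) * inverse (dist x y powr s)\<bar> * inverse (dist x y ^ DIM('a)))
      * indicator (ball x \<delta>) y"
    by (cases "y \<in> ball x \<delta>") auto
  then show ?thesis
    by (simp add: Psi_kernel_def abs_mult divide_inverse)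
qed

lemma Psi_le_liminf:
  fixes f :: "nat \<Rightarrow> 'a::euclidean_space \<Rightarrow> real"
  assumes [measurable]: "\<And>i. f i \<in> borel_measurable lebesgue"
    and lim: "AE x in lebesgue. (\<lambda>i. f i x) \<longlonglongrightarrow> z x"
  shows "Psi s G \<delta> z \<le> liminf (\<lambda>i. Psi s G \<delta> (f i))"
  unfolding Psi_eq_nn_integral_density
proof (rule nn_integral_le_liminf_AE)
  show "AE x in lebesgue. Psi_density s G \<delta> z x \<le> liminf (\<lambda>i. Psi_density s G \<delta> (f i) x)"
    using lim
  proof eventually_elim
    case (elim x)
    note lim_x = this
    show ?case
      unfolding Psi_density_def
    proof (rule nn_integral_le_liminf_AE)
      show "AE y in lebesgue. Psi_kernel s G \<delta> z x y \<le> liminf (\<lambda>i. Psi_kernel s G \<delta> (f i) x y)"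
        using lim
      proof eventually_elim
        case (elim y)
        show ?case
          using tendsto_Psi_kernel[where s=s and \<delta>=\<delta>, OF lim_x elim] by (simp add: lim_imp_Liminf)
      qed
    qed simp
  qed
qed simp

lemma locally_modular_cauchy_imp_tendsto:
  fixes f :: "nat \<Rightarrow> 'a::euclidean_space \<Rightarrow> real"
  assumes [measurable]: "\<And>k. f k \<in> borel_measurable lebesgue"
    and lim: "AE x in lebesgue. (\<lambda>i. f i x) \<longlonglongrightarrow> z x"
    and cauchy: "locally_modular_cauchy G f"
  shows "locally_modular_tendsto G f z"
  unfolding locally_modular_tendsto_def
proof (intro allI impI)
  fix R \<epsilon> :: real assume "0 < \<epsilon>"
  then have "Phi_on_cauchy_le G (cball 0 R) \<epsilon> f"
    using cauchy unfolding locally_modular_cauchy_def by blast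
  then obtain J where J: "\<And>j k. J \<le> j \<Longrightarrow> J \<le> k \<Longrightarrow>
      Phi_on (cball 0 R) G (\<lambda>x. f j x - f k x) \<le> ennreal \<epsilon>"
    unfolding Phi_on_cauchy_le_def by blast
  have [measurable]: "cball (0::'a) R \<in> sets lebesgue"
    by (rule sets_completionI_sets) (simp add: borel_closed)
  have "Phi_on (cball 0 R) G (\<lambda>x. f k x - z x) \<le> ennreal \<epsilon>" if "J \<le> k" for k
  proof -
    have "AE x in lebesgue. (\<lambda>i. f k x - f i x) \<longlonglongrightarrow> f k x - z x"
      using lim by eventually_elim (rule tendsto_diff[OF tendsto_const])
    then have "Phi_on (cball 0 R) G (\<lambda>x. f k x - z x) \<le>
        liminf (\<lambda>i. Phi_on (cball 0 R) G (\<lambda>x. f k x - f i x))"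
      by (intro Phi_on_le_liminf[where f="\<lambda>i x. f k x - f i x"]) simp_all
    also have "\<dots> \<le> ennreal \<epsilon>"
      using J[OF that] by (intro Liminf_le eventually_sequentiallyI[of J]) auto
    finally show ?thesis .
  qed
  then show "\<exists>J. \<forall>k\<ge>J. Phi_on (cball 0 R) G (\<lambda>x. f k x - z x) \<le> ennreal \<epsilon>"
    by blast
qed

lemma locally_modular_tendsto_cmult:
  fixes f :: "nat \<Rightarrow> 'a::euclidean_space \<Rightarrow> real"
  assumes [measurable]: "\<And>k. f k \<in> borel_measurable lebesgue" "z \<in> borel_measurable lebesgue"
    and "locally_modular_tendsto G f z"
  shows "locally_modular_tendsto G (\<lambda>k x. c * f k x) (\<lambda>x. c * z x)"
  unfolding locally_modular_tendsto_def
proof (intro allI impI)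
  fix R \<epsilon> :: real assume "0 < \<epsilon>"
  obtain C where C: "C \<ge> 1" "\<And>t. 0 \<le> t \<Longrightarrow> G (\<bar>c\<bar> * t) \<le> C * G t"
    using mult_le[of "\<bar>c\<bar>"] by auto
  have "0 < \<epsilon> / C"
    using \<open>0 < \<epsilon>\<close> C(1) by simp
  then have "\<exists>J. \<forall>k\<ge>J. Phi_on (cball 0 R) G (\<lambda>x. f k x - z x) \<le> ennreal (\<epsilon> / C)"
    using assms(3) unfolding locally_modular_tendsto_def by blast
  then obtain J where J: "\<And>k. J \<le> k \<Longrightarrow> Phi_on (cball 0 R) G (\<lambda>x. f k x - z x) \<le> ennreal (\<epsilon> / C)"
    by blast
  have [measurable]: "cball (0::'a) R \<in> sets lebesgue"
    by (rule sets_completionI_sets) (simp add: borel_closed)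
  have "Phi_on (cball 0 R) G (\<lambda>x. c * f k x - c * z x) \<le> ennreal \<epsilon>" if "J \<le> k" for k
  proof -
    have "Phi_on (cball 0 R) G (\<lambda>x. c * f k x - c * z x) \<le> ennreal C * Phi_on (cball 0 R) G (\<lambda>x. f k x - z x)"
      using C by (intro Phi_on_le_cmult) (auto simp: abs_mult simp flip: right_diff_distrib)
    also have "\<dots> \<le> ennreal C * ennreal (\<epsilon> / C)"
      using J[OF that] by (rule mult_left_mono) simp
    also have "\<dots> = ennreal \<epsilon>"
      using C(1) \<open>0 < \<epsilon>\<close> by (simp add: ennreal_mult[symmetric])
    finally show ?thesis .
  qed
  then show "\<exists>J. \<forall>k\<ge>J. Phi_on (cball 0 R) G (\<lambda>x. c * f k x - c * z x) \<le> ennreal \<epsilon>"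
    by blast
qed

lemma lux_norm_on_tendsto_zero:
  fixes f :: "nat \<Rightarrow> 'a::euclidean_space \<Rightarrow> real"
  assumes [measurable]: "\<And>k. f k \<in> borel_measurable lebesgue" "z \<in> borel_measurable lebesgue"
    and "locally_modular_tendsto G f z" and "compact K"
  shows "(\<lambda>k. lux_norm_on K G (\<lambda>x. f k x - z x)) \<longlonglongrightarrow> 0"
proof (rule LIMSEQ_I)
  fix \<rho> :: real assume "0 < \<rho>"
  obtain R where "\<forall>x\<in>K. norm x \<le> R"
    using compact_imp_bounded[OF \<open>compact K\<close>] unfolding bounded_iff by blast
  then have "K \<subseteq> cball 0 R"
    by auto
  have "locally_modular_tendsto G (\<lambda>k x. (2 / \<rho>) * f k x) (\<lambda>x. (2 / \<rho>) * z x)"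
    using assms(1-3) by (rule locally_modular_tendsto_cmult)
  from this[unfolded locally_modular_tendsto_def, rule_format, where R=R and \<epsilon>=1]
  obtain J where J: "\<And>k. J \<le> k \<Longrightarrow>
      Phi_on (cball 0 R) G (\<lambda>x. (2 / \<rho>) * f k x - (2 / \<rho>) * z x) \<le> 1"
    by auto
  have "\<bar>lux_norm_on K G (\<lambda>x. f k x - z x)\<bar> < \<rho>" if "J \<le> k" for k
  proof -
    have "(\<lambda>x. (f k x - z x) / (\<rho> / 2)) = (\<lambda>x. (2 / \<rho>) * f k x - (2 / \<rho>) * z x)"
      using \<open>0 < \<rho>\<close> by (simp add: fun_eq_iff field_simps)
    then have "Phi_on K G (\<lambda>x. (f k x - z x) / (\<rho> / 2)) \<le> 1"
      using order_trans[OF Phi_on_subset_le[OF \<open>K \<subseteq> cball 0 R\<close>] J[OF that]] by simp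
    then have "\<bar>lux_norm_on K G (\<lambda>x. f k x - z x)\<bar> \<le> \<rho> / 2"
      using \<open>0 < \<rho>\<close> by (intro lux_norm_on_abs_le) auto
    then show ?thesis
      using \<open>0 < \<rho>\<close> by linarith
  qed
  then show "\<exists>J. \<forall>k\<ge>J. norm (lux_norm_on K G (\<lambda>x. f k x - z x) - 0) < \<rho>"
    by (intro exI[of _ J]) simp
qed

end

context fractional_orlicz
begin

lemma unit_modular_ball_locally_compact:
  fixes f :: "nat \<Rightarrow> 'a::euclidean_space \<Rightarrow> real"
  assumes pos: "\<And>t. 0 < t \<Longrightarrow> 0 < G t" and [measurable]: "\<And>k. f k \<in> borel_measurable lebesgue"
    and bounded: "\<And>k. Phi G (f k) \<le> 1" "\<And>k. Psi s G \<delta> (f k) \<le> 1"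
  obtains r z where "strict_mono r" "z \<in> borel_measurable lebesgue" "Phi G z \<le> 1" "Psi s G \<delta> z \<le> 1"
    "locally_modular_tendsto G (\<lambda>k. f (r k)) z"
proof -
  obtain r1 where r1: "strict_mono r1" "locally_modular_cauchy G (\<lambda>k. f (r1 k))"
    using exists_locally_modular_cauchy_subseq[where f=f, OF pos[of 1] assms(2) bounded] by auto
  obtain r2 where r2: "strict_mono r2" "AE x in lebesgue. convergent (\<lambda>i. f (r1 (r2 i)) x)"
    using locally_modular_cauchy_imp_ae_convergent_subseq[OF pos _ r1(2)] by auto
  define r where "r = r1 \<circ> r2"
  define z where "z x = lim (\<lambda>i. f (r i) x)" for x
  have z_measurable [measurable]: "z \<in> borel_measurable lebesgue"
    unfolding z_def by measurable
  have lim: "AE x in lebesgue. (\<lambda>i. f (r i) x) \<longlonglongrightarrow> z x"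
    using r2(2) by eventually_elim (simp add: z_def r_def convergent_LIMSEQ_iff)
  have "Phi G z \<le> 1"
    using order_trans[OF Phi_on_le_liminf[OF _ _ lim] Liminf_le] bounded by auto
  moreover have "Psi s G \<delta> z \<le> 1"
    using order_trans[OF Psi_le_liminf[OF _ lim] Liminf_le] bounded by auto
  moreover have "locally_modular_tendsto G (\<lambda>k. f (r k)) z"
    using locally_modular_cauchy_subseq[OF r2(1) r1(2)] lim
    by (intro locally_modular_cauchy_imp_tendsto) (auto simp: r_def)
  moreover have "strict_mono r"
    unfolding r_def using r1(1) r2(1) by (rule strict_mono_o)
  ultimately show ?thesis
    using that z_measurable by blast
qed

lemma bounded_imp_locally_convergent_subseq:
  fixes u :: "nat \<Rightarrow> 'a::euclidean_space \<Rightarrow> real"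
  assumes pos: "\<And>t. 0 < t \<Longrightarrow> 0 < G t" and u: "\<And>k. u k \<in> W_sGd s G \<delta>"
    and M: "\<And>k. norm_sGd s G \<delta> (u k) \<le> M"
  obtains v r where "v \<in> W_sGd s G \<delta>" "strict_mono r"
    "\<And>K. compact K \<Longrightarrow> (\<lambda>k. lux_norm_on K G (\<lambda>x. u (r k) x - v x)) \<longlonglongrightarrow> 0"
proof -
  define L where "L = \<bar>M\<bar> + 1"
  have u_measurable [measurable]: "u k \<in> borel_measurable lebesgue" for k
    using u by (simp add: W_sGd_def LG_def)
  have "norm_sGd s G \<delta> (u k) < L" for k
    using M[of k] by (simp add: L_def)
  then obtain r z where r: "strict_mono r" and [measurable]: "z \<in> borel_measurable lebesgue"
    and z: "Phi G z \<le> 1" "Psi s G \<delta> z \<le> 1"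
    and lim: "locally_modular_tendsto G (\<lambda>k x. u (r k) x / L) z"
    using unit_modular_ball_locally_compact[OF pos, of "\<lambda>k x. u k x / L"]
      modulars_le_one_above_norm[OF u] by auto
  have tendsto_u: "locally_modular_tendsto G (\<lambda>k. u (r k)) (\<lambda>x. L * z x)"
    using locally_modular_tendsto_cmult[OF _ _ lim, of L] by (simp add: L_def)
  have W: "(\<lambda>x. L * z x) \<in> W_sGd s G \<delta>"
    using z by (intro cmult_in_W_sGd) (auto simp: W_sGd_def LG_def le_less_trans[OF _ ennreal_one_less_top])
  have "(\<lambda>x. L * z x) \<in> borel_measurable lebesgue"
    by measurable
  then have "(\<lambda>k. lux_norm_on K G (\<lambda>x. u (r k) x - L * z x)) \<longlonglongrightarrow> 0" if "compact K" for K
    by (rule lux_norm_on_tendsto_zero[where f="\<lambda>k. u (r k)", OF u_measurable _ tendsto_u that])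
  then show ?thesis
    by (rule that[OF W r])
qed

end

theorem theorem2p11:
  fixes G :: "real \<Rightarrow> real" and s \<delta> :: real
    and u :: "nat \<Rightarrow> 'a::euclidean_space \<Rightarrow> real"
  assumes "orlicz_function G" and "\<delta> > 0" and "0 < s" and "s < 1"
    and "\<And>k. u k \<in> W_sGd s G \<delta>"
    and "\<exists>M. \<forall>k. norm_sGd s G \<delta> (u k) \<le> M"
  shows "\<exists>v \<in> W_sGd s G \<delta>. \<exists>r :: nat \<Rightarrow> nat. strict_mono r \<and>
           (\<forall>K. compact K \<longrightarrow>
              (\<lambda>k. lux_norm_on K G (\<lambda>x. u (r k) x - v x)) \<longlonglongrightarrow> 0)"
proof -
  interpret orlicz G
    by (fact orlicz.intro[OF assms(1)])
  obtain M where M: "\<And>k. norm_sGd s G \<delta> (u k) \<le> M"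
    using assms(6) by blast
  consider (vanishing) "\<And>t. 0 \<le> t \<Longrightarrow> G t = 0" | (positive) "\<And>t. 0 < t \<Longrightarrow> 0 < G t"
    using vanishing_or_positive by blast
  then show ?thesis
  proof cases
    case vanishing
    then have norm_0: "lux_norm_on K G w = 0" for K w
      by (rule lux_norm_on_vanishing)
    show ?thesis
      using zero_in_W_sGd by (intro bexI[of _ "\<lambda>x. 0"] exI[of _ id]) (simp_all add: strict_mono_def norm_0)
  next
    case positive
    interpret fractional_orlicz G s \<delta>
      by unfold_locales (use assms in auto)
    obtain v r where "v \<in> W_sGd s G \<delta>" "strict_mono r"
      "\<And>K. compact K \<Longrightarrow> (\<lambda>k. lux_norm_on K G (\<lambda>x. u (r k) x - v x)) \<longlonglongrightarrow> 0"
      using bounded_imp_locally_convergent_subseq[where u=u, OF positive assms(5) M] by blast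
    then show ?thesis
      by (intro bexI[of _ v] exI[of _ r] conjI allI impI)
  qed
qed

end
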